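(* Let $C$ be the hyperelliptic curve $y^2=h(x):=a(x-x_1)\cdots(x-x_{2g+1})$ over $\mathbb C$ with $a\ne0$ and distinct $x_i$, let $X$ be its smooth projective model (genus $g$) and $P_0$ the unique point of $X$ over infinity. Let $D^+,D^-$ be effective divisors supported on finite points of $C$, and let $J:=(I_{D^+}\overline{I_{D^-}},I_C)$. Let $f=p(x)+q(x)y$ be an element of $J\setminus I_C$, written in this reduced form modulo $y^2-h(x)$, whose leading monomial is minimal among all elements of $J\setminus I_C$ with respect to the monomial order below. Then the divisor of $f$ on $X$ is $D^++\overline{D^-}+E-\deg_w(f)P_0$ for an effective divisor $E$ of finite points of degree $t=\deg_w(f)-\deg D^+-\deg D^-$, and $\overline E-tP_0$ is the reduced divisor linearly equivalent to $D^+-D^--(\deg D^+-\deg D^-)P_0$.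
   Context: $I_C=(y^2-h(x))\subset\mathbb C[x,y]$. For a finite point $P=(x_P,y_P)$, $I_P=(x-x_P,y-y_P,I_C)$; for an effective divisor $E=\sum m_iP_i$ of finite points, $I_E=\bigcap_i(I_{P_i}^{m_i},I_C)$. The involution $\iota(x,y)=(x,-y)$ acts on divisors ($\overline{E}=\iota(E)$) and on ideals ($\overline I=\{f(x,-y):f\in I\}$). The monomial order: first by weighted degree $\deg_w(x^ay^b)=(2g+1)a+2b$, ties broken lexicographically with $y>x$; $\deg_w(f)$ is the weighted degree of the leading monomial. A semireduced divisor is $P_1+\cdots+P_t-tP_0$ with $P_i\in X\setminus\{P_0\}$; it is reduced if no linearly equivalent semireduced divisor $P'_1+\cdots+P'_s-sP_0$ has $s<t$. *)

theory Defs
  imports "HOL-Computational_Algebra.Polynomial"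
begin

text \<open>Bivariate polynomials C[x,y] are modelled as complex poly poly:
  a polynomial in y whose coefficients are polynomials in x.
  The monomial x^a y^b of F has coefficient coeff (coeff F b) a.\<close>

type_synonym bpoly = "complex poly poly"
type_synonym point = "complex \<times> complex"
type_synonym divisor = "point option \<Rightarrow> int"  \<comment> \<open>None = P0, Some P = finite point P\<close>

inductive_set gen_ideal :: "'a::comm_ring_1 set \<Rightarrow> 'a set" for S where
  zero: "0 \<in> gen_ideal S"
| gen: "s \<in> S \<Longrightarrow> s \<in> gen_ideal S"
| add: "a \<in> gen_ideal S \<Longrightarrow> b \<in> gen_ideal S \<Longrightarrow> a + b \<in> gen_ideal S"
| mult: "a \<in> gen_ideal S \<Longrightarrow> r * a \<in> gen_ideal S"

definition ideal_prod :: "'a::comm_ring_1 set \<Rightarrow> 'a set \<Rightarrow> 'a set" where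
  "ideal_prod I J = gen_ideal {a * b | a b. a \<in> I \<and> b \<in> J}"

fun ideal_pow :: "'a::comm_ring_1 set \<Rightarrow> nat \<Rightarrow> 'a set" where
  "ideal_pow I 0 = UNIV"
| "ideal_pow I (Suc n) = ideal_prod I (ideal_pow I n)"

definition X_var :: bpoly where "X_var = [: [:0, 1:] :]"
definition Y_var :: bpoly where "Y_var = [: 0, 1 :]"

definition curve_eq :: "complex poly \<Rightarrow> bpoly" where
  "curve_eq h = [: -h, 0, 1 :]"

definition I_C :: "complex poly \<Rightarrow> bpoly set" where
  "I_C h = gen_ideal {curve_eq h}"

definition on_curve :: "complex poly \<Rightarrow> point \<Rightarrow> bool" where
  "on_curve h P \<longleftrightarrow> (snd P)^2 = poly h (fst P)"

definition I_pt :: "complex poly \<Rightarrow> point \<Rightarrow> bpoly set" where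
  "I_pt h P = gen_ideal {X_var - [: [: fst P :] :], Y_var - [: [: snd P :] :], curve_eq h}"

definition effective :: "complex poly \<Rightarrow> (point \<Rightarrow> nat) \<Rightarrow> bool" where
  "effective h E \<longleftrightarrow> finite {P. E P \<noteq> 0} \<and> (\<forall>P. E P \<noteq> 0 \<longrightarrow> on_curve h P)"

definition deg_eff :: "(point \<Rightarrow> nat) \<Rightarrow> nat" where
  "deg_eff E = (\<Sum>P\<in>{P. E P \<noteq> 0}. E P)"

definition I_div :: "complex poly \<Rightarrow> (point \<Rightarrow> nat) \<Rightarrow> bpoly set" where
  "I_div h E = (\<Inter>P\<in>{P. E P \<noteq> 0}. gen_ideal (ideal_pow (I_pt h P) (E P) \<union> I_C h))"

definition iota :: "point \<Rightarrow> point" where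
  "iota P = (fst P, - snd P)"

definition conj_bp :: "bpoly \<Rightarrow> bpoly" where
  "conj_bp F = F \<circ>\<^sub>p [: 0, -1 :]"

definition conj_ideal :: "bpoly set \<Rightarrow> bpoly set" where
  "conj_ideal I = conj_bp ` I"

definition supp :: "bpoly \<Rightarrow> (nat \<times> nat) set" where
  "supp F = {(a, b). coeff (coeff F b) a \<noteq> 0}"

definition wdeg :: "nat \<Rightarrow> nat \<times> nat \<Rightarrow> nat" where
  "wdeg g m = 2 * fst m + (2 * g + 1) * snd m"

definition mono_less :: "nat \<Rightarrow> nat \<times> nat \<Rightarrow> nat \<times> nat \<Rightarrow> bool" where
  "mono_less g m m' \<longleftrightarrow> wdeg g m < wdeg g m' \<or>
     (wdeg g m = wdeg g m' \<and> (snd m < snd m' \<or> (snd m = snd m' \<and> fst m < fst m')))"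

definition lead_mono :: "nat \<Rightarrow> bpoly \<Rightarrow> nat \<times> nat" where
  "lead_mono g F = (THE m. m \<in> supp F \<and> (\<forall>m'\<in>supp F. m' \<noteq> m \<longrightarrow> mono_less g m' m))"

definition deg_w :: "nat \<Rightarrow> bpoly \<Rightarrow> nat" where
  "deg_w g F = wdeg g (lead_mono g F)"

definition ord_fin :: "complex poly \<Rightarrow> point \<Rightarrow> bpoly \<Rightarrow> nat" where
  "ord_fin h P F = (GREATEST m. F \<in> gen_ideal (ideal_pow (I_pt h P) m \<union> I_C h))"

definition ord_inf :: "nat \<Rightarrow> complex poly \<Rightarrow> bpoly \<Rightarrow> int" where
  "ord_inf g h F = - int (deg_w g (pseudo_mod F (curve_eq h)))"

definition div_of :: "nat \<Rightarrow> complex poly \<Rightarrow> bpoly \<Rightarrow> divisor" where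
  "div_of g h F = (\<lambda>Q. case Q of None \<Rightarrow> ord_inf g h F
        | Some P \<Rightarrow> (if on_curve h P then int (ord_fin h P F) else 0))"

definition lin_equiv :: "nat \<Rightarrow> complex poly \<Rightarrow> divisor \<Rightarrow> divisor \<Rightarrow> bool" where
  "lin_equiv g h D D' \<longleftrightarrow> (\<exists>F G. F \<notin> I_C h \<and> G \<notin> I_C h \<and>
       (\<forall>Q. D Q - D' Q = div_of g h F Q - div_of g h G Q))"

definition semired :: "(point \<Rightarrow> nat) \<Rightarrow> divisor" where
  "semired E = (\<lambda>Q. case Q of None \<Rightarrow> - int (deg_eff E) | Some P \<Rightarrow> int (E P))"

definition is_reduced :: "nat \<Rightarrow> complex poly \<Rightarrow> divisor \<Rightarrow> bool" where
  "is_reduced g h D \<longleftrightarrow> (\<exists>E. effective h E \<and> D = semired E \<and>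
      (\<forall>E'. effective h E' \<and> lin_equiv g h (semired E') D \<longrightarrow> deg_eff E \<le> deg_eff E'))"

end

(*
  At each point P of the affine curve, substituting a local parametrisation (x, y) = (x(t), y(t))
  into a polynomial gives a power series; its order ord_P is the valuation at P, and the ideal
  (I_P^m, I_C) is exactly the set of functions with ord_P >= m.  Since x - x(P) lies in
  (I_P I_{iota P}, I_C), an induction on the divisor shows that J is the ideal of all functions
  vanishing on D = D+ + iota D-, so div f = D + E - deg_w(f) P0 for an effective E.  For
  F = p + q y with norm N(F) = p^2 - h q^2 (that is, F conj(F) modulo y^2 - h), the weighted
  degree of F is deg N(F), which is also the sum of the orders of F over all finite points.
  Multiplying conj(f) by the polynomial in x with divisor D+ + iota D+ shows that
  iota E - deg E P0 is linearly equivalent to D+ - D- - (deg D+ - deg D-) P0.  If it were also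
  equivalent, via F/G, to E' - deg E' P0 with deg E' < deg E, then f conj(F) G would vanish on
  D + iota E' + div N(G), hence be N(G) phi modulo y^2 - h with phi in J, and comparing norms
  would give deg_w phi < deg_w f, contradicting the minimality of f.
*)
theory Submission
  imports
    Defs
    "HOL-Computational_Algebra.Polynomial_FPS"
    "HOL-Computational_Algebra.Fundamental_Theorem_Algebra"
begin

unbundle fps_syntax

section \<open>Ideals of a commutative ring\<close>

definition is_ideal :: "'a::comm_ring_1 set \<Rightarrow> bool" where
  "is_ideal I \<longleftrightarrow> 0 \<in> I \<and> (\<forall>a\<in>I. \<forall>b\<in>I. a + b \<in> I) \<and> (\<forall>r. \<forall>a\<in>I. r * a \<in> I)"

lemma is_idealI:
  "0 \<in> I \<Longrightarrow> (\<And>a b. a \<in> I \<Longrightarrow> b \<in> I \<Longrightarrow> a + b \<in> I) \<Longrightarrow> (\<And>r a. a \<in> I \<Longrightarrow> r * a \<in> I)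
    \<Longrightarrow> is_ideal I"
  unfolding is_ideal_def by blast

lemma is_ideal_gen_ideal: "is_ideal (gen_ideal S)"
  by (auto simp: is_ideal_def intro: gen_ideal.intros)

lemma is_ideal_UNIV: "is_ideal UNIV" by (auto simp: is_ideal_def)

lemma ideal_0: "is_ideal I \<Longrightarrow> 0 \<in> I" by (simp add: is_ideal_def)

lemma ideal_add: "is_ideal I \<Longrightarrow> a \<in> I \<Longrightarrow> b \<in> I \<Longrightarrow> a + b \<in> I"
  by (simp add: is_ideal_def)

lemma ideal_mult_left: "is_ideal I \<Longrightarrow> a \<in> I \<Longrightarrow> r * a \<in> I"
  by (simp add: is_ideal_def)

lemma ideal_mult_right: "is_ideal I \<Longrightarrow> a \<in> I \<Longrightarrow> a * r \<in> I"
  by (metis ideal_mult_left mult.commute)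

lemma ideal_uminus: "is_ideal I \<Longrightarrow> a \<in> I \<Longrightarrow> - a \<in> I"
  by (metis ideal_mult_left mult_minus1)

lemma ideal_diff: "is_ideal I \<Longrightarrow> a \<in> I \<Longrightarrow> b \<in> I \<Longrightarrow> a - b \<in> I"
  by (metis ideal_add ideal_uminus diff_conv_add_uminus)

lemma is_ideal_colon: "is_ideal I \<Longrightarrow> is_ideal {x. a * x \<in> I}"
  by (rule is_idealI) (auto simp: distrib_left mult.left_commute intro: ideal_0 ideal_add ideal_mult_left)

lemma is_ideal_mult_coset:
  assumes C: "is_ideal C" and K: "is_ideal K"
  shows "is_ideal {z. \<exists>w\<in>K. z - u * w \<in> C}"
proof (rule is_idealI)
  show "0 \<in> {z. \<exists>w\<in>K. z - u * w \<in> C}" using ideal_0[OF K] ideal_0[OF C] by force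
next
  fix x y assume "x \<in> {z. \<exists>w\<in>K. z - u * w \<in> C}" "y \<in> {z. \<exists>w\<in>K. z - u * w \<in> C}"
  then obtain w1 w2 where "w1 \<in> K" "x - u * w1 \<in> C" "w2 \<in> K" "y - u * w2 \<in> C" by blast
  moreover have "(x + y) - u * (w1 + w2) = (x - u * w1) + (y - u * w2)" by (simp add: algebra_simps)
  ultimately show "x + y \<in> {z. \<exists>w\<in>K. z - u * w \<in> C}"
    using ideal_add[OF C] ideal_add[OF K] by (metis (mono_tags, lifting) mem_Collect_eq)
next
  fix r x assume "x \<in> {z. \<exists>w\<in>K. z - u * w \<in> C}"
  then obtain w where "w \<in> K" "x - u * w \<in> C" by blast
  moreover have "r * x - u * (r * w) = r * (x - u * w)" by (simp add: algebra_simps)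
  ultimately show "r * x \<in> {z. \<exists>w\<in>K. z - u * w \<in> C}"
    using ideal_mult_left[OF C] ideal_mult_left[OF K] by (metis (mono_tags, lifting) mem_Collect_eq)
qed

lemma gen_ideal_least: "S \<subseteq> I \<Longrightarrow> is_ideal I \<Longrightarrow> gen_ideal S \<subseteq> I"
proof
  fix x assume I: "S \<subseteq> I" "is_ideal I" and "x \<in> gen_ideal S"
  from this(3) show "x \<in> I"
    by (induction x rule: gen_ideal.induct) (use I in \<open>auto intro: ideal_0 ideal_add ideal_mult_left\<close>)
qed

lemma gen_ideal_in_ideal[consumes 1]:
  assumes "x \<in> gen_ideal S" "is_ideal I" "\<And>s. s \<in> S \<Longrightarrow> s \<in> I"
  shows "x \<in> I"
  using gen_ideal_least[of S I] assms by blast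

lemma gen_ideal_mono: "S \<subseteq> T \<Longrightarrow> gen_ideal S \<subseteq> gen_ideal T"
  by (rule gen_ideal_least) (auto intro: gen_ideal.gen is_ideal_gen_ideal)

lemma gen_ideal_singleton: "gen_ideal {s} = {r * s |r. True}"
proof
  have "is_ideal {r * s |r. True}"
  proof (rule is_idealI)
    show "0 \<in> {r * s |r. True}" by (rule CollectI, rule exI[of _ 0]) simp
    show "a + b \<in> {r * s |r. True}" if "a \<in> {r * s |r. True}" "b \<in> {r * s |r. True}" for a b
      using that by (auto simp: distrib_right[symmetric])
    show "r * a \<in> {r * s |r. True}" if "a \<in> {r * s |r. True}" for r a
      using that by (auto simp: mult.assoc[symmetric])
  qed
  then show "gen_ideal {s} \<subseteq> {r * s |r. True}"
    by (rule gen_ideal_least[rotated]) (auto intro: exI[of _ 1])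
  show "{r * s |r. True} \<subseteq> gen_ideal {s}"
    by (auto intro: gen_ideal.mult gen_ideal.gen)
qed

lemma is_ideal_ideal_prod: "is_ideal (ideal_prod I J)"
  by (simp add: ideal_prod_def is_ideal_gen_ideal)

lemma ideal_prod_mem: "a \<in> I \<Longrightarrow> b \<in> J \<Longrightarrow> a * b \<in> ideal_prod I J"
  unfolding ideal_prod_def by (rule gen_ideal.gen) blast

lemma ideal_prod_least:
  "(\<And>a b. a \<in> I \<Longrightarrow> b \<in> J \<Longrightarrow> a * b \<in> K) \<Longrightarrow> is_ideal K \<Longrightarrow> ideal_prod I J \<subseteq> K"
  unfolding ideal_prod_def by (rule gen_ideal_least) auto

lemma ideal_prod_mono: "I \<subseteq> I' \<Longrightarrow> J \<subseteq> J' \<Longrightarrow> ideal_prod I J \<subseteq> ideal_prod I' J'"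
  by (rule ideal_prod_least) (auto intro: ideal_prod_mem is_ideal_ideal_prod)

lemma is_ideal_ideal_pow: "is_ideal (ideal_pow I n)"
  by (cases n) (auto simp: is_ideal_UNIV is_ideal_ideal_prod)

lemma ideal_pow_mult:
  "x \<in> ideal_pow I a \<Longrightarrow> y \<in> ideal_pow I b \<Longrightarrow> x * y \<in> ideal_pow I (a + b)"
proof (induction a arbitrary: x)
  case 0
  then show ?case using ideal_mult_left[OF is_ideal_ideal_pow] by simp
next
  case (Suc a)
  have "ideal_prod I (ideal_pow I a) \<subseteq> {x. y * x \<in> ideal_pow I (Suc a + b)}"
  proof (rule ideal_prod_least[OF _ is_ideal_colon[OF is_ideal_ideal_pow]])
    fix i w assume "i \<in> I" "w \<in> ideal_pow I a"
    then have "i * (w * y) \<in> ideal_pow I (Suc a + b)"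
      using Suc.IH Suc.prems(2) by (simp add: ideal_prod_mem)
    then show "i * w \<in> {x. y * x \<in> ideal_pow I (Suc a + b)}" by (simp add: ac_simps)
  qed
  then show ?case using Suc.prems(1) by (auto simp: mult.commute)
qed

lemma ideal_pow_one: "x \<in> I \<Longrightarrow> x \<in> ideal_pow I (Suc 0)"
  using ideal_prod_mem[of x I 1 UNIV] by simp

lemma ideal_pow_antimono: "m \<le> n \<Longrightarrow> ideal_pow I n \<subseteq> ideal_pow I m"
proof (induction n rule: dec_induct)
  case (step n)
  have "ideal_pow I (Suc k) \<subseteq> ideal_pow I k" for k
    by (induction k) (auto intro: set_mp[OF ideal_prod_mono[OF order_refl]])
  then show ?case using step.IH by blast
qed simp

definition ideal_pow_plus :: "'a::comm_ring_1 set \<Rightarrow> 'a set \<Rightarrow> nat \<Rightarrow> 'a set" where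
  "ideal_pow_plus I C m = gen_ideal (ideal_pow I m \<union> C)"

lemma is_ideal_ideal_pow_plus: "is_ideal (ideal_pow_plus I C m)"
  by (simp add: ideal_pow_plus_def is_ideal_gen_ideal)

lemma ideal_pow_plus_right: "c \<in> C \<Longrightarrow> c \<in> ideal_pow_plus I C m"
  by (simp add: ideal_pow_plus_def gen_ideal.gen)

lemma ideal_pow_plus_left: "c \<in> ideal_pow I m \<Longrightarrow> c \<in> ideal_pow_plus I C m"
  by (simp add: ideal_pow_plus_def gen_ideal.gen)

lemma ideal_pow_plus_0: "ideal_pow_plus I C 0 = UNIV"
  by (auto simp: ideal_pow_plus_def intro: gen_ideal.gen)

lemma ideal_pow_plus_mult:
  assumes C: "is_ideal C" and x: "x \<in> ideal_pow_plus I C a" and y: "y \<in> ideal_pow_plus I C b"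
  shows "x * y \<in> ideal_pow_plus I C (a + b)"
proof -
  let ?K = "ideal_pow_plus I C (a + b)"
  have gens: "x' * y' \<in> ?K" if "x' \<in> ideal_pow I a \<union> C" "y' \<in> ideal_pow I b \<union> C"
    for x' y'
  proof (cases "x' \<in> C \<or> y' \<in> C")
    case True
    then have "x' * y' \<in> C" using ideal_mult_left[OF C] ideal_mult_right[OF C] by blast
    then show ?thesis by (rule ideal_pow_plus_right)
  next
    case False
    then show ?thesis using that by (auto intro: ideal_pow_plus_left ideal_pow_mult)
  qed
  have "y \<in> {z. x' * z \<in> ?K}" if "x' \<in> ideal_pow I a \<union> C" for x'
    using y unfolding ideal_pow_plus_def[of I C b]
    by (rule gen_ideal_in_ideal[OF _ is_ideal_colon[OF is_ideal_ideal_pow_plus]]) (auto intro: gens[OF that])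
  then have yx: "x' \<in> {z. y * z \<in> ?K}" if "x' \<in> ideal_pow I a \<union> C" for x'
    using that by (simp add: mult.commute)
  have "x \<in> {z. y * z \<in> ?K}"
    using x yx unfolding ideal_pow_plus_def[of I C a]
    by (rule gen_ideal_in_ideal[OF _ is_ideal_colon[OF is_ideal_ideal_pow_plus]])
  then show ?thesis by (simp add: mult.commute)
qed

lemma ideal_pow_plus_antimono: "m \<le> n \<Longrightarrow> ideal_pow_plus I C n \<subseteq> ideal_pow_plus I C m"
  unfolding ideal_pow_plus_def by (rule gen_ideal_mono) (use ideal_pow_antimono in blast)

section \<open>Polynomials and formal power series\<close>

lemma fps_X_power_dvd_iff: "fps_X ^ m dvd (f::complex fps) \<longleftrightarrow> f = 0 \<or> m \<le> subdegree f"
proof (cases "f = 0")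
  case False
  have "fps_X ^ m \<noteq> (0::complex fps)" by simp
  then show ?thesis using fps_dvd_iff[of "fps_X ^ m" f] False by simp
qed simp

lemma fps_X_power_dvd_iff_nth: "fps_X ^ m dvd (f::complex fps) \<longleftrightarrow> (\<forall>i<m. f $ i = 0)"
  unfolding fps_X_power_dvd_iff
proof
  assume a: "f = 0 \<or> m \<le> subdegree f"
  show "\<forall>i<m. f $ i = 0"
  proof (intro allI impI)
    fix i assume "i < m"
    show "f $ i = 0"
    proof (cases "f = 0")
      case False
      then have "i < subdegree f" using a \<open>i < m\<close> by linarith
      then show ?thesis by (rule nth_less_subdegree_zero)
    qed simp
  qed
next
  assume a: "\<forall>i<m. f $ i = 0"
  show "f = 0 \<or> m \<le> subdegree f"
  proof (rule ccontr)
    assume "\<not> (f = 0 \<or> m \<le> subdegree f)"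
    then have "f \<noteq> 0" "subdegree f < m" by auto
    then show False using a nth_subdegree_nonzero[of f] by blast
  qed
qed

lemma fps_X_dvd_iff: "fps_X dvd (f::complex fps) \<longleftrightarrow> f $ 0 = 0"
  using fps_X_power_dvd_iff_nth[of 1 f] by simp

lemma linear_dvd_sub_const: "[:- x0, 1:] dvd ((a::complex poly) - [:poly a x0:])"
  by (rule iffD1[OF poly_eq_0_iff_dvd]) simp

lemma degree_diff_eq_max:
  fixes p q :: "'a::ab_group_add poly"
  assumes "degree p \<noteq> degree q"
  shows "degree (p - q) = max (degree p) (degree q)"
  using assms degree_add_eq_left[of "- q" p] degree_add_eq_right[of p "- q"] by (auto simp: max_def)

lemma poly_degree_le_1_eq: "degree (F::'a::zero poly) \<le> 1 \<Longrightarrow> F = [:coeff F 0, coeff F 1:]"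
  by (rule poly_eqI) (auto simp: coeff_pCons split: nat.splits intro!: coeff_eq_0)

lemma pcompose_power_left: "pcompose (p ^ n) q = (pcompose p q) ^ (n::nat)"
  by (induction n) (simp_all add: pcompose_mult one_pCons)

lemma coeff_1_pcompose_square: "coeff (pcompose r [:0, 0, 1:]) (Suc 0) = (0::complex)"
  by (induction r) (simp_all add: pcompose_pCons coeff_pCons)

lemma sum_order_roots:
  fixes N :: "complex poly"
  assumes "N \<noteq> 0" shows "(\<Sum>x\<in>{x. poly N x = 0}. order x N) = degree N"
proof -
  have "degree N = size (proots N)" by (simp add: size_proots_complex)
  also have "\<dots> = (\<Sum>x\<in>set_mset (proots N). count (proots N) x)"
    by (rule size_multiset_overloaded_eq)
  finally show ?thesis using assms by simp
qed

lemma order_prod: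
  fixes p :: "'i \<Rightarrow> 'a::idom poly"
  assumes "finite S" "\<And>i. i \<in> S \<Longrightarrow> p i \<noteq> 0"
  shows "order x (\<Prod>i\<in>S. p i) = (\<Sum>i\<in>S. order x (p i))"
proof -
  have "order x (\<Prod>i\<in>S. p i) = count (proots (\<Prod>i\<in>S. p i)) x"
    using assms by simp
  also have "\<dots> = (\<Sum>i\<in>S. order x (p i))"
    using assms by (simp add: proots_prod count_sum)
  finally show ?thesis .
qed

lemma order_linear_power: "order x ([:- a, 1:] ^ k) = (if x = a then k else (0::nat))"
proof (cases "x = a")
  case True then show ?thesis using order_power_n_n[of a k] by simp
next
  case False
  then have "poly ([:- a, 1:] ^ k) x \<noteq> 0" by simp
  then show ?thesis using False by (simp add: order_0I)
qed

lemma complex_poly_linear_factor: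
  fixes c :: "complex poly"
  assumes "degree c = Suc n"
  obtains a c' where "c = [:- a, 1:] * c'" "c' \<noteq> 0" "degree c' = n"
proof -
  have "\<not> constant (poly c)" using assms constant_degree by (metis nat.distinct(1))
  then obtain a where "poly c a = 0" using fundamental_theorem_of_algebra by blast
  then obtain c' where c': "c = [:- a, 1:] * c'" using poly_eq_0_iff_dvd by (metis dvdE)
  moreover have "c' \<noteq> 0" using assms c' by auto
  moreover from this have "degree c = 1 + degree c'" unfolding c' by (subst degree_mult_eq) simp_all
  ultimately show ?thesis using assms by (intro that) simp_all
qed

lemma tangent_ring_identity:
  fixes X Y x y c k H :: "'a::comm_ring_1"
  assumes "H = y * y + (X - x) * (c + (X - x) * k)"
  shows "(y + y) * (Y - y) - c * (X - x) = (Y * Y - H) + (X - x) * (X - x) * k - (Y - y) * (Y - y)"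
  unfolding assms by (simp add: algebra_simps)

section \<open>Bivariate polynomials, the involution and divisors\<close>

definition bconst :: "complex \<Rightarrow> bpoly" where "bconst c = [:[:c:]:]"

lemma bconst_add: "bconst (a + b) = bconst a + bconst b" by (simp add: bconst_def)

lemma bconst_mult: "bconst (a * b) = bconst a * bconst b" by (simp add: bconst_def)

lemma bconst_0[simp]: "bconst 0 = 0" by (simp add: bconst_def)

lemma bconst_1[simp]: "bconst 1 = 1" by (simp add: bconst_def one_pCons)

lemma ideal_bconst_cancel: "is_ideal I \<Longrightarrow> c \<noteq> 0 \<Longrightarrow> bconst c * F \<in> I \<Longrightarrow> F \<in> I"
  using ideal_mult_left[of I "bconst c * F" "bconst (1 / c)"] by (simp flip: mult.assoc bconst_mult)

lemma X_minus_bconst: "X_var - bconst x0 = [:[:- x0, 1:]:]"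
  by (simp add: X_var_def bconst_def)

lemma const_bpoly_taylor:
  obtains k2 where "[:k:] = bconst (poly k x0) + (X_var - bconst x0) * [:k2:]"
proof -
  obtain k2 where "k = [:poly k x0:] + [:- x0, 1:] * k2"
    using linear_dvd_sub_const[of x0 k] by (metis dvdE diff_eq_eq add.commute)
  then have "[:k:] = bconst (poly k x0) + (X_var - bconst x0) * [:k2:]"
    by (simp add: bconst_def X_var_def)
  then show ?thesis by (rule that)
qed

lemma pCons_eq_Y_var: "pCons a r = [:a:] + Y_var * r"
  by (simp add: Y_var_def)

lemma conj_bp_add: "conj_bp (F + G) = conj_bp F + conj_bp G" by (simp add: conj_bp_def pcompose_add)

lemma conj_bp_mult: "conj_bp (F * G) = conj_bp F * conj_bp G" by (simp add: conj_bp_def pcompose_mult)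

lemma conj_bp_diff: "conj_bp (F - G) = conj_bp F - conj_bp G" by (simp add: conj_bp_def pcompose_diff)

lemma conj_bp_const[simp]: "conj_bp [:c:] = [:c:]" by (simp add: conj_bp_def)

lemma conj_bp_0[simp]: "conj_bp 0 = 0" by (simp add: conj_bp_def)

lemma conj_bp_X[simp]: "conj_bp X_var = X_var" by (simp add: X_var_def)

lemma conj_bp_Y[simp]: "conj_bp Y_var = - Y_var" by (simp add: Y_var_def conj_bp_def pcompose_pCons)

lemma conj_bp_linear: "conj_bp [:p, q:] = [:p, - q:]" by (simp add: conj_bp_def pcompose_pCons)

lemma conj_bp_conj_bp[simp]: "conj_bp (conj_bp F) = F"
proof -
  have "pcompose [:0, -1:] [:0, -1:] = ([:0, 1:] :: complex poly poly)" by (simp add: pcompose_pCons)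
  then show ?thesis unfolding conj_bp_def by (metis pcompose_assoc pcompose_idR)
qed

lemma conj_bp_curve_eq[simp]: "conj_bp (curve_eq h) = curve_eq h"
  by (simp add: curve_eq_def conj_bp_def pcompose_pCons)

lemma iota_iota[simp]: "iota (iota P) = P" by (simp add: iota_def)

lemma on_curve_iota[simp]: "on_curve h (iota P) = on_curve h P" by (simp add: on_curve_def iota_def)

lemma iota_fst[simp]: "fst (iota P) = fst P" by (simp add: iota_def)

lemma iota_snd[simp]: "snd (iota P) = - snd P" by (simp add: iota_def)

lemma iota_eq_iff: "iota P = P \<longleftrightarrow> snd P = 0" by (cases P) (auto simp: iota_def)

lemma inj_iota: "inj iota" by (metis injI iota_iota)

lemma conj_bp_gen_ideal: assumes "is_ideal I" "\<And>s. s \<in> S \<Longrightarrow> conj_bp s \<in> I" "F \<in> gen_ideal S"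
  shows "conj_bp F \<in> I"
proof -
  have "is_ideal {F. conj_bp F \<in> I}"
    by (rule is_idealI)
      (use assms(1) in \<open>auto simp: conj_bp_add conj_bp_mult intro: ideal_0 ideal_add ideal_mult_left\<close>)
  then have "F \<in> {F. conj_bp F \<in> I}" using assms(2,3) gen_ideal_in_ideal by blast
  then show ?thesis by simp
qed

lemma sum_reindex_iota: assumes "finite A" "\<And>P. P \<in> A \<Longrightarrow> iota P \<in> A"
  shows "(\<Sum>P\<in>A. f (iota P)) = (\<Sum>P\<in>A. f P)"
proof -
  have "iota ` A = A" using assms(2) by (force intro: image_eqI[of _ iota "iota _"])
  moreover have "inj_on iota A" by (rule inj_on_subset[OF inj_iota]) simp
  ultimately show ?thesis using sum.reindex[of iota A f] by simp
qed

lemma effective_off_curve: "effective h A \<Longrightarrow> \<not> on_curve h P \<Longrightarrow> A P = 0"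
  unfolding effective_def by blast

lemma effective_comp_iota: "effective h A \<Longrightarrow> effective h (\<lambda>Q. A (iota Q))"
proof -
  assume A: "effective h A"
  have S: "{Q. A (iota Q) \<noteq> 0} = iota ` {P. A P \<noteq> 0}"
    by (auto intro: image_eqI[of _ iota "iota _"])
  show ?thesis using A unfolding effective_def S by (metis finite_imageI iota_iota on_curve_iota)
qed

lemma deg_eff_eq_sum: "finite S \<Longrightarrow> {P. A P \<noteq> 0} \<subseteq> S \<Longrightarrow> deg_eff A = (\<Sum>P\<in>S. A P)"
  unfolding deg_eff_def by (rule sum.mono_neutral_left) auto

lemma deg_eff_decrement:
  assumes fin: "finite {P. A P \<noteq> 0}" and P0: "A P0 \<noteq> 0"
  shows "deg_eff (A(P0 := A P0 - 1)) = deg_eff A - 1"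
proof -
  let ?S = "{P. A P \<noteq> 0}"
  have "deg_eff (A(P0 := A P0 - 1)) = (\<Sum>P\<in>?S. (A(P0 := A P0 - 1)) P)"
    by (rule deg_eff_eq_sum[OF fin]) auto
  also have "\<dots> = (A P0 - 1) + (\<Sum>P\<in>?S - {P0}. A P)"
    using sum.remove[OF fin, of P0 "A(P0 := A P0 - 1)"] P0 by simp
  also have "deg_eff A = A P0 + (\<Sum>P\<in>?S - {P0}. A P)"
    unfolding deg_eff_def using sum.remove[OF fin, of P0 A] P0 by simp
  ultimately show ?thesis using P0 by simp
qed

lemma deg_eff_comp_iota: "finite {P. A P \<noteq> 0} \<Longrightarrow> deg_eff (\<lambda>Q. A (iota Q)) = deg_eff A"
proof -
  assume fin: "finite {P. A P \<noteq> 0}"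
  have S: "{Q. A (iota Q) \<noteq> 0} = iota ` {P. A P \<noteq> 0}"
    by (auto intro: image_eqI[of _ iota "iota _"])
  have inj: "inj_on iota {P. A P \<noteq> 0}" by (rule inj_on_subset[OF inj_iota]) simp
  show ?thesis unfolding deg_eff_def S sum.reindex[OF inj] by simp
qed

section \<open>The weighted degree\<close>

lemma mono_less_asym: "mono_less g m m' \<Longrightarrow> \<not> mono_less g m' m"
  by (auto simp: mono_less_def)

lemma lead_monoI:
  assumes "m \<in> supp F" "\<And>m'. m' \<in> supp F \<Longrightarrow> m' \<noteq> m \<Longrightarrow> mono_less g m' m"
  shows "lead_mono g F = m"
  unfolding lead_mono_def
proof (rule the_equality)
  show "m \<in> supp F \<and> (\<forall>m'\<in>supp F. m' \<noteq> m \<longrightarrow> mono_less g m' m)"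
    using assms by blast
  fix m1 assume m1: "m1 \<in> supp F \<and> (\<forall>m'\<in>supp F. m' \<noteq> m1 \<longrightarrow> mono_less g m' m1)"
  show "m1 = m"
  proof (rule ccontr)
    assume "m1 \<noteq> m"
    then have "mono_less g m1 m" "mono_less g m m1" using m1 assms by auto
    then show False using mono_less_asym by blast
  qed
qed

lemma deg_w_eqI:
  assumes inj: "inj_on (wdeg g) (supp F)" and m: "m \<in> supp F" "wdeg g m = W"
    and le: "\<And>m'. m' \<in> supp F \<Longrightarrow> wdeg g m' \<le> W"
  shows "deg_w g F = W"
proof -
  have "mono_less g m' m" if "m' \<in> supp F" "m' \<noteq> m" for m'
    using le[OF that(1)] inj_onD[OF inj _ that(1) m(1)] that(2) m(2)
    by (fastforce simp: mono_less_def)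
  then show ?thesis using lead_monoI[OF m(1)] m(2) by (simp add: deg_w_def)
qed

lemma deg_w_le_of_mono_le:
  "lead_mono g f = lead_mono g G \<or> mono_less g (lead_mono g f) (lead_mono g G) \<Longrightarrow> deg_w g f \<le> deg_w g G"
  by (auto simp: deg_w_def mono_less_def)

lemma coeff_linear: "coeff [:p, q:] b = (if b = 0 then p else if b = 1 then q else 0)"
  by (cases b) (simp_all add: coeff_pCons split: nat.split)

lemma supp_linear: "supp [:p, q:] = {(a, 0) |a. coeff p a \<noteq> 0} \<union> {(a, 1) |a. coeff q a \<noteq> 0}"
  by (auto simp: supp_def coeff_linear split: if_splits)

text \<open>On linear polynomials in y the weight 2g+1 of y is odd, so parity separates the two
  rows of monomials and no two monomials have the same weighted degree.\<close>

lemma inj_on_wdeg_linear: "inj_on (wdeg g) (supp [:p, q:])"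
proof (rule inj_onI)
  fix m m' assume "m \<in> supp [:p, q:]" "m' \<in> supp [:p, q:]" "wdeg g m = wdeg g m'"
  then show "m = m'" unfolding supp_linear wdeg_def by auto presburger+
qed

lemma deg_w_linear:
  assumes "[:p, q:] \<noteq> 0"
  shows "deg_w g [:p, q:] = max (2 * degree p) (if q = 0 then 0 else 2 * degree q + (2 * g + 1))"
    (is "_ = ?W")
proof (rule deg_w_eqI[OF inj_on_wdeg_linear])
  show "wdeg g m' \<le> ?W" if "m' \<in> supp [:p, q:]" for m'
    using that unfolding supp_linear wdeg_def by (fastforce dest: le_degree simp: le_max_iff_disj)
  show "(if 2 * degree p < ?W then (degree q, 1) else (degree p, 0)) \<in> supp [:p, q:]"
    using assms by (auto simp: supp_linear)
  show "wdeg g (if 2 * degree p < ?W then (degree q, 1) else (degree p, 0)) = ?W"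
    by (auto simp: wdeg_def)
qed

section \<open>The curve\<close>

locale hyperelliptic =
  fixes g :: nat and h :: "complex poly"
  assumes deg_h: "degree h = 2 * g + 1" and sqf: "\<And>x0. order x0 h \<le> 1"
begin

lemma h_nonzero: "h \<noteq> 0" using deg_h by auto

lemma degree_curve_eq: "degree (curve_eq h) = 2" by (simp add: curve_eq_def)

lemma coeff_curve_eq_2: "coeff (curve_eq h) 2 = 1" by (simp add: curve_eq_def numeral_2_eq_2)

lemma curve_eq_nonzero: "curve_eq h \<noteq> 0" by (simp add: curve_eq_def)

lemma curve_eq_Y: "curve_eq h = Y_var * Y_var - [:h:]"
  by (simp add: curve_eq_def Y_var_def)

lemma I_C_multiples: "I_C h = {r * curve_eq h |r. True}"
  by (simp add: I_C_def gen_ideal_singleton)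

lemma is_ideal_I_C: "is_ideal (I_C h)" by (simp add: I_C_def is_ideal_gen_ideal)

lemma curve_eq_in_I_C: "curve_eq h \<in> I_C h" by (simp add: I_C_def gen_ideal.gen)

definition curve_rem :: "bpoly \<Rightarrow> bpoly" where "curve_rem F = pseudo_mod F (curve_eq h)"

lemma curve_rem_diff_in_I_C: "F - curve_rem F \<in> I_C h"
  and degree_curve_rem: "degree (curve_rem F) \<le> 1"
proof -
  obtain q r where qr: "pseudo_divmod F (curve_eq h) = (q, r)" by (metis prod.exhaust)
  have rr: "curve_rem F = r" using qr by (simp add: curve_rem_def pseudo_mod_def)
  from pseudo_divmod[OF curve_eq_nonzero qr] have
    "smult (coeff (curve_eq h) (degree (curve_eq h)) ^ (Suc (degree F) - degree (curve_eq h))) F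
      = curve_eq h * q + r"
    "r = 0 \<or> degree r < degree (curve_eq h)" by blast+
  then have e: "F = curve_eq h * q + r" and d: "r = 0 \<or> degree r < 2"
    by (simp_all add: degree_curve_eq coeff_curve_eq_2)
  show "F - curve_rem F \<in> I_C h" using e rr by (auto simp: I_C_multiples mult.commute)
  show "degree (curve_rem F) \<le> 1" using d rr by auto
qed

lemma I_C_degree_le_1_eq_0: assumes "degree A \<le> 1" "A \<in> I_C h" shows "A = 0"
proof -
  obtain r where "A = r * curve_eq h" using assms(2) by (auto simp: I_C_multiples)
  moreover have "r \<noteq> 0 \<Longrightarrow> degree (r * curve_eq h) \<ge> 2"
    using curve_eq_nonzero by (simp add: degree_mult_eq degree_curve_eq)
  ultimately show ?thesis using assms(1) by fastforce
qed

lemma I_C_iff_curve_rem: "F \<in> I_C h \<longleftrightarrow> curve_rem F = 0"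
proof
  assume "F \<in> I_C h"
  then have "F - (F - curve_rem F) \<in> I_C h"
    using curve_rem_diff_in_I_C ideal_diff[OF is_ideal_I_C] by blast
  then show "curve_rem F = 0" using I_C_degree_le_1_eq_0 degree_curve_rem by simp
next
  assume "curve_rem F = 0" then show "F \<in> I_C h" using curve_rem_diff_in_I_C[of F] by simp
qed

lemma curve_rem_eq_self: "degree F \<le> 1 \<Longrightarrow> curve_rem F = F"
proof -
  assume d: "degree F \<le> 1"
  have "F - curve_rem F \<in> I_C h" by (rule curve_rem_diff_in_I_C)
  moreover have "degree (F - curve_rem F) \<le> 1" using d degree_curve_rem[of F]
    by (meson degree_diff_le)
  ultimately show ?thesis using I_C_degree_le_1_eq_0 by fastforce
qed

lemma const_in_I_C: "[:c:] \<in> I_C h \<Longrightarrow> c = 0"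
  using I_C_degree_le_1_eq_0[of "[:c:]"] by simp

lemma const_notin_I_C: "c \<noteq> 0 \<Longrightarrow> [:c:] \<notin> I_C h" using const_in_I_C by blast

definition cofactor :: "complex \<Rightarrow> complex poly" where
  "cofactor x0 = (h - [:poly h x0:]) div [:- x0, 1:]"

lemma h_eq_cofactor: "h = [:poly h x0:] + [:- x0, 1:] * cofactor x0"
  unfolding cofactor_def dvd_mult_div_cancel[OF linear_dvd_sub_const] by simp

lemma h_factor_cofactor: "poly h x0 = 0 \<Longrightarrow> h = [:- x0, 1:] * cofactor x0"
  using h_eq_cofactor[of x0] by simp

lemma cofactor_at_root_nonzero: assumes "poly h x0 = 0" shows "poly (cofactor x0) x0 \<noteq> 0"
proof
  assume "poly (cofactor x0) x0 = 0"
  then obtain k where k: "cofactor x0 = [:- x0, 1:] * k" by (metis dvdE poly_eq_0_iff_dvd)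
  have "h = [:- x0, 1:] ^ 2 * k"
    by (subst h_factor_cofactor[OF assms], subst k) (simp only: power2_eq_square mult.assoc)
  then have "[:- x0, 1:] ^ 2 dvd h" by (metis dvd_triv_left)
  then have "order x0 h \<ge> 2" using h_nonzero by (simp add: order_divides)
  then show False using sqf[of x0] by simp
qed

section \<open>Local expansions at the points of the curve\<close>

text \<open>Local coordinates at P = (x0, y0) in terms of a local parameter t: away from the branch points
  x = x0 + t and y is the square root of h(x0 + t) with value y0 at t = 0; at a branch point
  (y0 = 0) x = x0 + t^2 and y = t sqrt(cofactor x0 (x0 + t^2)).  Substituting them into F gives
  the power series expand P F, whose order is the order of vanishing of F at P.\<close>

definition local_x :: "point \<Rightarrow> complex poly" where
  "local_x P = (if snd P = 0 then [:fst P, 0, 1:] else [:fst P, 1:])"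

definition branch_sqrt :: "complex \<Rightarrow> complex fps" where
  "branch_sqrt x0 =
    fps_radical (\<lambda>_ _. csqrt (poly (cofactor x0) x0)) 2 (fps_of_poly (pcompose (cofactor x0) [:x0, 0, 1:]))"

definition local_y :: "point \<Rightarrow> complex fps" where
  "local_y P = (if snd P = 0 then fps_X * branch_sqrt (fst P)
           else fps_radical (\<lambda>_ _. snd P) 2 (fps_of_poly (pcompose h [:fst P, 1:])))"

lemma branch_sqrt_sq: assumes "poly h x0 = 0"
  shows "branch_sqrt x0 ^ 2 = fps_of_poly (pcompose (cofactor x0) [:x0, 0, 1:])" "branch_sqrt x0 $ 0 \<noteq> 0"
proof -
  let ?a = "fps_of_poly (pcompose (cofactor x0) [:x0, 0, 1:])"
  have a0: "?a $ 0 = poly (cofactor x0) x0" by simp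
  have cs: "csqrt (poly (cofactor x0) x0) * csqrt (poly (cofactor x0) x0) = poly (cofactor x0) x0"
    by (metis power2_csqrt power2_eq_square)
  have "?a $ 0 \<noteq> 0" using a0 cofactor_at_root_nonzero[OF assms] by simp
  from power_radical[OF this, of "\<lambda>_ _. csqrt (poly (cofactor x0) x0)" 1]
  show "branch_sqrt x0 ^ 2 = ?a" by (simp add: branch_sqrt_def a0 numeral_2_eq_2 cs)
  show "branch_sqrt x0 $ 0 \<noteq> 0"
    using cofactor_at_root_nonzero[OF assms] by (simp add: branch_sqrt_def)
qed

lemma local_x_0: "coeff (local_x P) 0 = fst P" by (simp add: local_x_def)

lemma degree_local_x: "degree (local_x P) > 0" by (simp add: local_x_def)

lemma local_y_0: "local_y P $ 0 = snd P" by (simp add: local_y_def)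

lemma local_y_sq: assumes "on_curve h P" shows "local_y P ^ 2 = fps_of_poly (pcompose h (local_x P))"
proof (cases "snd P = 0")
  case True
  then have h0: "poly h (fst P) = 0" using assms by (simp add: on_curve_def)
  have e: "h = [:- fst P, 1:] * cofactor (fst P)" by (rule h_factor_cofactor[OF h0])
  have "pcompose h (local_x P)
      = pcompose [:- fst P, 1:] [:fst P, 0, 1:] * pcompose (cofactor (fst P)) [:fst P, 0, 1:]"
  proof -
    have "local_x P = [:fst P, 0, 1:]" using True by (simp add: local_x_def)
    then have "pcompose h (local_x P) = pcompose ([:- fst P, 1:] * cofactor (fst P)) [:fst P, 0, 1:]"
      by (simp only: e[symmetric])
    then show ?thesis by (simp only: pcompose_mult)
  qed
  also have "pcompose [:- fst P, 1:] [:fst P, 0, 1:] = [:0, 0, 1:]"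
    by (simp add: pcompose_pCons)
  finally have "fps_of_poly (pcompose h (local_x P)) = fps_X ^ 2 * branch_sqrt (fst P) ^ 2"
    using branch_sqrt_sq[OF h0] by (simp add: fps_of_poly_mult fps_of_poly_pCons power2_eq_square)
  then show ?thesis using True by (simp add: local_y_def power_mult_distrib)
next
  case False
  let ?a = "fps_of_poly (pcompose h [:fst P, 1:])"
  have a0: "?a $ 0 = poly h (fst P)" by simp
  also have "\<dots> = snd P ^ 2" using assms by (simp add: on_curve_def)
  finally have a0': "?a $ 0 = snd P ^ 2" .
  then have "?a $ 0 \<noteq> 0" using False by simp
  from power_radical[OF this, of "\<lambda>_ _. snd P" 1]
  show ?thesis using False a0' by (simp add: local_y_def local_x_def numeral_2_eq_2)
qed

definition expand_poly :: "point \<Rightarrow> complex poly \<Rightarrow> complex fps" where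
  "expand_poly P c = fps_of_poly (pcompose c (local_x P))"

definition expand :: "point \<Rightarrow> bpoly \<Rightarrow> complex fps" where
  "expand P F = poly (map_poly (expand_poly P) F) (local_y P)"

lemma expand_poly_0[simp]: "expand_poly P 0 = 0" by (simp add: expand_poly_def)

lemma expand_poly_add: "expand_poly P (a + b) = expand_poly P a + expand_poly P b"
  by (simp add: expand_poly_def pcompose_add fps_of_poly_add)

lemma expand_poly_mult: "expand_poly P (a * b) = expand_poly P a * expand_poly P b"
  by (simp add: expand_poly_def pcompose_mult fps_of_poly_mult)

lemma expand_poly_const[simp]: "expand_poly P [:c:] = fps_const c"
  by (simp add: expand_poly_def fps_of_poly_const)

lemma expand_poly_1[simp]: "expand_poly P 1 = 1" by (simp add: expand_poly_def one_pCons)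

lemma expand_poly_uminus: "expand_poly P (- a) = - expand_poly P a"
  by (simp add: expand_poly_def pcompose_uminus fps_of_poly_uminus)

lemma expand_pCons: "expand P (pCons a F) = expand_poly P a + local_y P * expand P F"
  by (simp add: expand_def map_poly_pCons)

lemma expand_0[simp]: "expand P 0 = 0" by (simp add: expand_def)

lemma expand_add: "expand P (F + G) = expand P F + expand P G"
proof (induction F arbitrary: G)
  case 0 then show ?case by simp
next
  case (pCons a F)
  show ?case
  proof (cases G rule: pCons_cases)
    case (pCons b G')
    have ih: "expand P (F + G') = expand P F + expand P G'" by (rule pCons.IH)
    show ?thesis unfolding pCons by (simp add: expand_pCons expand_poly_add ih algebra_simps)
  qed
qed

lemma expand_smult: "expand P (smult a F) = expand_poly P a * expand P F"
  by (induction F) (simp_all add: expand_pCons expand_poly_mult algebra_simps)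

lemma expand_mult: "expand P (F * G) = expand P F * expand P G"
proof (induction F)
  case 0 then show ?case by simp
next
  case (pCons a F)
  have "expand P (pCons a F * G) = expand P (smult a G) + expand P (pCons 0 (F * G))"
    by (simp add: expand_add)
  then show ?case using pCons.IH by (simp add: expand_smult expand_pCons algebra_simps)
qed

lemma expand_const: "expand P [:c:] = expand_poly P c" by (simp add: expand_pCons)

lemma expand_uminus: "expand P (- F) = - expand P F"
  using expand_add[of P "-F" F] by (simp add: eq_neg_iff_add_eq_0)

lemma expand_diff: "expand P (F - G) = expand P F - expand P G"
  using expand_add[of P F "-G"] by (simp add: expand_uminus)

lemma expand_1[simp]: "expand P 1 = 1" by (simp add: one_pCons expand_const)

lemma expand_power: "expand P (F ^ n) = expand P F ^ n"
  by (induction n) (simp_all add: expand_mult)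

lemma expand_bconst[simp]: "expand P (bconst c) = fps_const c" by (simp add: bconst_def expand_const)

lemma expand_X: "expand P X_var = fps_of_poly (local_x P)"
  by (simp add: X_var_def expand_const expand_poly_def pcompose_pCons)

lemma expand_Y: "expand P Y_var = local_y P"
  by (simp add: Y_var_def expand_pCons)

lemma expand_linear: "expand P [:p, q:] = expand_poly P p + local_y P * expand_poly P q"
  by (simp add: expand_pCons)

lemma expand_curve_eq: "on_curve h P \<Longrightarrow> expand P (curve_eq h) = 0"
proof -
  assume P: "on_curve h P"
  have "expand_poly P h = local_y P * local_y P"
    using local_y_sq[OF P] by (simp add: expand_poly_def power2_eq_square)
  then show ?thesis by (simp add: curve_eq_def expand_pCons expand_poly_uminus)
qed

lemma expand_I_C: "on_curve h P \<Longrightarrow> F \<in> I_C h \<Longrightarrow> expand P F = 0"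
  by (auto simp: I_C_multiples expand_mult expand_curve_eq)

lemma square_eq_h_times_square: assumes "p * p = h * (q * q)" shows "p = 0 \<and> q = 0"
proof (cases "q = 0")
  case True then show ?thesis using assms by simp
next
  case False
  then have "p \<noteq> 0" using assms h_nonzero by auto
  then have "even (degree (p * p))" by (simp add: degree_mult_eq)
  moreover have "odd (degree (h * (q * q)))" using False h_nonzero deg_h by (simp add: degree_mult_eq)
  ultimately show ?thesis using assms by simp
qed

lemma expand_curve_rem: "on_curve h P \<Longrightarrow> expand P F = expand P (curve_rem F)"
  using expand_I_C[OF _ curve_rem_diff_in_I_C, of P F] by (simp add: expand_diff)

lemma expand_poly_eq_0_iff: "expand_poly P c = 0 \<longleftrightarrow> c = 0"
  using pcompose_eq_0[OF _ degree_local_x, of c P] fps_of_poly_eq_iff[of _ 0]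
  by (auto simp: expand_poly_def)

lemma expand_poly_diff: "expand_poly P (a - b) = expand_poly P a - expand_poly P b"
  by (simp add: expand_poly_def pcompose_diff fps_of_poly_diff)

lemma expand_eq_0_iff:
  assumes P: "on_curve h P"
  shows "expand P F = 0 \<longleftrightarrow> F \<in> I_C h"
proof
  assume e: "expand P F = 0"
  define p q where "p = coeff (curve_rem F) 0" and "q = coeff (curve_rem F) 1"
  have R: "curve_rem F = [:p, q:]"
    unfolding p_def q_def by (rule poly_degree_le_1_eq[OF degree_curve_rem])
  have "expand_poly P p = - (local_y P * expand_poly P q)"
    using e expand_curve_rem[OF P, of F] R by (simp add: expand_linear eq_neg_iff_add_eq_0)
  moreover have "expand_poly P h = local_y P * local_y P"
    using local_y_sq[OF P] by (simp add: expand_poly_def power2_eq_square)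
  ultimately have "expand_poly P (p * p - h * (q * q)) = 0"
    by (simp add: expand_poly_diff expand_poly_mult algebra_simps)
  then have "p * p = h * (q * q)" by (simp add: expand_poly_eq_0_iff)
  then have "p = 0 \<and> q = 0" by (rule square_eq_h_times_square)
  then show "F \<in> I_C h" using R I_C_iff_curve_rem by simp
qed (rule expand_I_C[OF P])

lemma expand_poly_nth_0: "expand_poly P c $ 0 = poly c (fst P)"
  by (simp add: expand_poly_def local_x_0)

lemma expand_linear_nth_0: "expand P [:p, q:] $ 0 = poly p (fst P) + snd P * poly q (fst P)"
  by (simp add: expand_linear expand_poly_nth_0 local_y_0)

section \<open>The ideals (I_P^m, I_C) and the order of vanishing\<close>

definition order_ideal :: "point \<Rightarrow> nat \<Rightarrow> bpoly set" where
  "order_ideal P m = ideal_pow_plus (I_pt h P) (I_C h) m"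

lemma order_ideal_eq: "order_ideal P m = gen_ideal (ideal_pow (I_pt h P) m \<union> I_C h)"
  by (simp add: order_ideal_def ideal_pow_plus_def)

lemma is_ideal_I_pt: "is_ideal (I_pt h P)" by (simp add: I_pt_def is_ideal_gen_ideal)

lemma is_ideal_order_ideal: "is_ideal (order_ideal P m)"
  by (simp add: order_ideal_def is_ideal_ideal_pow_plus)

lemma I_C_in_order_ideal: "F \<in> I_C h \<Longrightarrow> F \<in> order_ideal P m"
  by (simp add: order_ideal_def ideal_pow_plus_right)

lemma ideal_pow_in_order_ideal: "F \<in> ideal_pow (I_pt h P) m \<Longrightarrow> F \<in> order_ideal P m"
  by (simp add: order_ideal_def ideal_pow_plus_left)

lemma order_ideal_mult: "x \<in> order_ideal P a \<Longrightarrow> y \<in> order_ideal P b \<Longrightarrow> x * y \<in> order_ideal P (a + b)"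
  unfolding order_ideal_def by (rule ideal_pow_plus_mult[OF is_ideal_I_C])

lemma I_pt_in_order_ideal_1: "x \<in> I_pt h P \<Longrightarrow> x \<in> order_ideal P 1"
  using ideal_pow_in_order_ideal[OF ideal_pow_one, of x P] by simp

lemma order_ideal_antimono: "m \<le> n \<Longrightarrow> order_ideal P n \<subseteq> order_ideal P m"
  unfolding order_ideal_def by (rule ideal_pow_plus_antimono)

lemma order_ideal_0: "order_ideal P 0 = UNIV" by (simp add: order_ideal_def ideal_pow_plus_0)

lemma X_minus_in_I_pt: "X_var - bconst (fst P) \<in> I_pt h P"
  by (simp add: I_pt_def bconst_def gen_ideal.gen)

lemma Y_minus_in_I_pt: "Y_var - bconst (snd P) \<in> I_pt h P"
  by (simp add: I_pt_def bconst_def gen_ideal.gen)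

lemma curve_eq_in_I_pt: "curve_eq h \<in> I_pt h P"
  by (simp add: I_pt_def gen_ideal.gen)

lemma is_ideal_fps_X_power_dvd_expand: "is_ideal {F. fps_X ^ m dvd expand P F}"
  by (rule is_idealI) (auto simp: expand_add expand_mult)

lemma fps_X_dvd_expand_I_pt:
  assumes P: "on_curve h P" and F: "F \<in> I_pt h P"
  shows "fps_X ^ 1 dvd expand P F"
proof -
  have "fps_X ^ 1 dvd expand P (X_var - bconst (fst P))"
    by (simp add: fps_X_dvd_iff expand_diff expand_X local_x_0)
  moreover have "fps_X ^ 1 dvd expand P (Y_var - bconst (snd P))"
    by (simp add: fps_X_dvd_iff expand_diff expand_Y local_y_0)
  moreover have "fps_X ^ 1 dvd expand P (curve_eq h)" by (simp add: expand_curve_eq[OF P])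
  ultimately have "F \<in> {F. fps_X ^ 1 dvd expand P F}" using F unfolding I_pt_def
    by (elim gen_ideal_in_ideal[OF _ is_ideal_fps_X_power_dvd_expand]) (auto simp: bconst_def)
  then show ?thesis by simp
qed

lemma fps_X_power_dvd_expand_ideal_pow:
  assumes P: "on_curve h P"
  shows "F \<in> ideal_pow (I_pt h P) m \<Longrightarrow> fps_X ^ m dvd expand P F"
proof (induction m arbitrary: F)
  case (Suc m)
  have "i * w \<in> {F. fps_X ^ Suc m dvd expand P F}"
    if "i \<in> I_pt h P" "w \<in> ideal_pow (I_pt h P) m" for i w
    using mult_dvd_mono[OF fps_X_dvd_expand_I_pt[OF P that(1)] Suc.IH[OF that(2)]]
    by (simp add: expand_mult)
  then have "ideal_prod (I_pt h P) (ideal_pow (I_pt h P) m) \<subseteq> {F. fps_X ^ Suc m dvd expand P F}"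
    by (rule ideal_prod_least[OF _ is_ideal_fps_X_power_dvd_expand])
  then show ?case using Suc.prems by auto
qed simp

lemma fps_X_power_dvd_expand_order_ideal:
  assumes P: "on_curve h P" and F: "F \<in> order_ideal P m"
  shows "fps_X ^ m dvd expand P F"
proof -
  have "s \<in> {F. fps_X ^ m dvd expand P F}" if "s \<in> ideal_pow (I_pt h P) m \<union> I_C h" for s
    using that fps_X_power_dvd_expand_ideal_pow[OF P] expand_I_C[OF P] by auto
  with F have "F \<in> {F. fps_X ^ m dvd expand P F}" unfolding order_ideal_eq
    by (elim gen_ideal_in_ideal[OF _ is_ideal_fps_X_power_dvd_expand])
  then show ?thesis by simp
qed

definition uniformizer :: "point \<Rightarrow> bpoly" where
  "uniformizer P = (if snd P = 0 then Y_var else X_var - bconst (fst P))"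

lemma uniformizer_in_I_pt: "uniformizer P \<in> I_pt h P"
  using X_minus_in_I_pt[of P] Y_minus_in_I_pt[of P] by (auto simp: uniformizer_def)

lemma uniformizer_power: "uniformizer P ^ k \<in> ideal_pow (I_pt h P) k"
  by (induction k) (simp_all add: ideal_prod_mem uniformizer_in_I_pt)

lemma expand_uniformizer:
  assumes P: "on_curve h P"
  shows "\<exists>U. expand P (uniformizer P) = fps_X * U \<and> U $ 0 \<noteq> 0"
proof (cases "snd P = 0")
  case True
  then have "poly h (fst P) = 0" using P by (simp add: on_curve_def)
  then show ?thesis using True branch_sqrt_sq(2) by (auto simp: uniformizer_def expand_Y local_y_def)
next
  case False
  then show ?thesis
    by (intro exI[of _ 1]) (simp add: uniformizer_def expand_diff expand_X local_x_def fps_of_poly_linear)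
qed

lemma const_mod_I_pt: "\<exists>c. r - bconst c \<in> I_pt h P"
proof (induction r)
  case 0 show ?case by (intro exI[of _ 0]) (simp add: ideal_0[OF is_ideal_I_pt])
next
  case (pCons a r)
  then obtain c' where c': "r - bconst c' \<in> I_pt h P" by blast
  obtain k where "[:a:] = bconst (poly a (fst P)) + (X_var - bconst (fst P)) * [:k:]"
    by (rule const_bpoly_taylor)
  then have e1: "[:a:] - bconst (poly a (fst P)) = [:k:] * (X_var - bconst (fst P))"
    by (metis add_diff_cancel_left' mult.commute)
  have "pCons a r - bconst (poly a (fst P) + snd P * c') =
      ([:a:] - bconst (poly a (fst P))) + Y_var * (r - bconst c') + bconst c' * (Y_var - bconst (snd P))"
    by (subst pCons_eq_Y_var) (simp add: bconst_add bconst_mult algebra_simps)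
  also have "\<dots> \<in> I_pt h P"
    using is_ideal_I_pt c' X_minus_in_I_pt Y_minus_in_I_pt unfolding e1
    by (intro ideal_add ideal_mult_left) auto
  finally show ?case by blast
qed

text \<open>Shown below to contain order_ideal P k: the quotient order_ideal P k / order_ideal P (k + 1)
  is spanned by the k-th power of the uniformizer.\<close>

definition uniformizer_span :: "point \<Rightarrow> nat \<Rightarrow> bpoly set" where
  "uniformizer_span P k = {F. \<exists>c. F - bconst c * uniformizer P ^ k \<in> order_ideal P (Suc k)}"

lemma uniformizer_spanI:
  "F - bconst c * uniformizer P ^ k \<in> order_ideal P (Suc k) \<Longrightarrow> F \<in> uniformizer_span P k"
  unfolding uniformizer_span_def by blast

lemma uniformizer_spanE:
  assumes "F \<in> uniformizer_span P k"
  obtains c where "F - bconst c * uniformizer P ^ k \<in> order_ideal P (Suc k)"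
  using assms unfolding uniformizer_span_def by blast

lemma is_ideal_uniformizer_span: "is_ideal (uniformizer_span P k)"
proof (rule is_idealI)
  show "0 \<in> uniformizer_span P k"
    by (auto simp: uniformizer_span_def intro!: exI[of _ 0] ideal_0[OF is_ideal_order_ideal])
next
  fix a b assume "a \<in> uniformizer_span P k" "b \<in> uniformizer_span P k"
  then obtain c1 c2 where "a - bconst c1 * uniformizer P ^ k \<in> order_ideal P (Suc k)"
    "b - bconst c2 * uniformizer P ^ k \<in> order_ideal P (Suc k)" by (auto simp: uniformizer_span_def)
  then have "(a - bconst c1 * uniformizer P ^ k) + (b - bconst c2 * uniformizer P ^ k)
      \<in> order_ideal P (Suc k)"
    by (rule ideal_add[OF is_ideal_order_ideal])
  then have "a + b - bconst (c1 + c2) * uniformizer P ^ k \<in> order_ideal P (Suc k)"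
    by (simp add: bconst_add algebra_simps)
  then show "a + b \<in> uniformizer_span P k" by (auto simp: uniformizer_span_def)
next
  fix r a assume "a \<in> uniformizer_span P k"
  then obtain c where c: "a - bconst c * uniformizer P ^ k \<in> order_ideal P (Suc k)"
    by (auto simp: uniformizer_span_def)
  obtain c' where c': "r - bconst c' \<in> I_pt h P" using const_mod_I_pt by blast
  have "(r - bconst c') * (bconst c * uniformizer P ^ k) \<in> order_ideal P (1 + k)"
    by (rule order_ideal_mult[OF I_pt_in_order_ideal_1[OF c']
          ideal_pow_in_order_ideal[OF ideal_mult_left[OF is_ideal_ideal_pow uniformizer_power]]])
  then have "r * (a - bconst c * uniformizer P ^ k) + (r - bconst c') * (bconst c * uniformizer P ^ k)
      \<in> order_ideal P (Suc k)"
    using ideal_add[OF is_ideal_order_ideal ideal_mult_left[OF is_ideal_order_ideal c]] by simp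
  moreover have "r * (a - bconst c * uniformizer P ^ k) + (r - bconst c') * (bconst c * uniformizer P ^ k)
      = r * a - bconst (c' * c) * uniformizer P ^ k"
    by (simp add: bconst_mult algebra_simps)
  ultimately show "r * a \<in> uniformizer_span P k" by (auto simp: uniformizer_span_def)
qed

text \<open>The tangent line 2 y0 (y - y0) = h'(x0) (x - x0) at P, as a relation modulo quadratic terms
  in the generators of the maximal ideal at P (the constant poly (cofactor x0) x0 is h'(x0)).\<close>

lemma tangent_identity:
  assumes P: "on_curve h P"
  obtains k2 where "bconst (2 * snd P) * (Y_var - bconst (snd P))
      - bconst (poly (cofactor (fst P)) (fst P)) * (X_var - bconst (fst P))
    = curve_eq h + (X_var - bconst (fst P)) * (X_var - bconst (fst P)) * [:k2:]
      - (Y_var - bconst (snd P)) * (Y_var - bconst (snd P))"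
proof -
  define x0 y0 c where "x0 = fst P" and "y0 = snd P" and "c = poly (cofactor x0) x0"
  obtain k2 where k2: "[:cofactor x0:] = bconst c + (X_var - bconst x0) * [:k2:]"
    unfolding c_def by (rule const_bpoly_taylor)
  have hy: "poly h x0 = y0 * y0" using P by (simp add: on_curve_def x0_def y0_def power2_eq_square)
  have "[:h:] = [:[:poly h x0:]:] + [:[:- x0, 1:]:] * [:cofactor x0:]"
    by (subst h_eq_cofactor[of x0]) simp
  then have "[:h:] = bconst (y0 * y0) + (X_var - bconst x0) * [:cofactor x0:]"
    unfolding hy X_minus_bconst by (simp add: bconst_def)
  then have "[:h:] = bconst y0 * bconst y0 + (X_var - bconst x0) * (bconst c + (X_var - bconst x0) * [:k2:])"
    unfolding k2 bconst_mult .
  from tangent_ring_identity[OF this, of Y_var] show ?thesis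
    unfolding x0_def y0_def c_def curve_eq_Y[symmetric] bconst_add[symmetric]
    unfolding mult_2[symmetric] by (rule that)
qed

lemma tangent_in_ideal:
  assumes P: "on_curve h P" and J: "is_ideal J" "curve_eq h \<in> J"
    and sq: "\<And>a b. a \<in> I_pt h P \<Longrightarrow> b \<in> I_pt h P \<Longrightarrow> a * b \<in> J"
  shows "bconst (2 * snd P) * (Y_var - bconst (snd P))
      - bconst (poly (cofactor (fst P)) (fst P)) * (X_var - bconst (fst P)) \<in> J"
proof -
  obtain k2 where eq: "bconst (2 * snd P) * (Y_var - bconst (snd P))
      - bconst (poly (cofactor (fst P)) (fst P)) * (X_var - bconst (fst P))
    = curve_eq h + (X_var - bconst (fst P)) * (X_var - bconst (fst P)) * [:k2:]
      - (Y_var - bconst (snd P)) * (Y_var - bconst (snd P))"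
    using tangent_identity[OF P] by blast
  have "(X_var - bconst (fst P)) * (X_var - bconst (fst P)) * [:k2:] \<in> J"
    by (rule ideal_mult_right[OF J(1) sq[OF X_minus_in_I_pt X_minus_in_I_pt]])
  then show ?thesis unfolding eq
    by (rule ideal_diff[OF J(1) ideal_add[OF J(1) J(2)] sq[OF Y_minus_in_I_pt Y_minus_in_I_pt]])
qed

lemma I_pt_mult_in_order_ideal_2: "a \<in> I_pt h P \<Longrightarrow> b \<in> I_pt h P \<Longrightarrow> a * b \<in> order_ideal P 2"
  using order_ideal_mult[OF I_pt_in_order_ideal_1 I_pt_in_order_ideal_1, of a P b]
    by (simp add: numeral_2_eq_2)

lemma tangent_in_order_ideal_2:
  assumes P: "on_curve h P"
  shows "bconst (2 * snd P) * (Y_var - bconst (snd P))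
      - bconst (poly (cofactor (fst P)) (fst P)) * (X_var - bconst (fst P)) \<in> order_ideal P 2"
  using P is_ideal_order_ideal I_C_in_order_ideal[OF curve_eq_in_I_C] I_pt_mult_in_order_ideal_2
  by (rule tangent_in_ideal)

lemma Y_minus_in_uniformizer_span:
  assumes P: "on_curve h P" and y0: "snd P \<noteq> 0"
  shows "Y_var - bconst (snd P) \<in> uniformizer_span P 1"
proof -
  define c where "c = poly (cofactor (fst P)) (fst P) / (2 * snd P)"
  have "bconst (2 * snd P) * bconst c = bconst (poly (cofactor (fst P)) (fst P))"
    using y0 by (simp add: c_def flip: bconst_mult)
  then have "bconst (2 * snd P) * ((Y_var - bconst (snd P)) - bconst c * uniformizer P)
      = bconst (2 * snd P) * (Y_var - bconst (snd P))
        - bconst (poly (cofactor (fst P)) (fst P)) * (X_var - bconst (fst P))"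
    using y0 by (simp add: uniformizer_def right_diff_distrib mult.assoc[symmetric])
  then have "bconst (2 * snd P) * ((Y_var - bconst (snd P)) - bconst c * uniformizer P) \<in> order_ideal P 2"
    using tangent_in_order_ideal_2[OF P] by simp
  then have "(Y_var - bconst (snd P)) - bconst c * uniformizer P \<in> order_ideal P 2"
    by (rule ideal_bconst_cancel[OF is_ideal_order_ideal, rotated]) (simp add: y0)
  then show ?thesis by (intro uniformizer_spanI[of _ c]) (simp add: numeral_2_eq_2)
qed

lemma X_minus_in_order_ideal_2:
  assumes P: "on_curve h P" and y0: "snd P = 0"
  shows "X_var - bconst (fst P) \<in> order_ideal P 2"
proof -
  have h0: "poly h (fst P) = 0" using P y0 by (simp add: on_curve_def)
  have "- (bconst (poly (cofactor (fst P)) (fst P)) * (X_var - bconst (fst P))) \<in> order_ideal P 2"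
    using tangent_in_order_ideal_2[OF P] y0 by simp
  then have "bconst (poly (cofactor (fst P)) (fst P)) * (X_var - bconst (fst P)) \<in> order_ideal P 2"
    using ideal_uminus[OF is_ideal_order_ideal] by fastforce
  then show ?thesis
    by (rule ideal_bconst_cancel[OF is_ideal_order_ideal cofactor_at_root_nonzero[OF h0]])
qed

lemma I_pt_subset_uniformizer_span:
  assumes P: "on_curve h P"
  shows "I_pt h P \<subseteq> uniformizer_span P 1"
  unfolding I_pt_def
proof (rule gen_ideal_least[OF _ is_ideal_uniformizer_span])
  have zero: "0 \<in> order_ideal P (Suc 1)" by (rule ideal_0[OF is_ideal_order_ideal])
  have "X_var - bconst (fst P) \<in> uniformizer_span P 1"
  proof (cases "snd P = 0")
    case True
    then have "X_var - bconst (fst P) - bconst 0 * uniformizer P ^ 1 \<in> order_ideal P (Suc 1)"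
      using X_minus_in_order_ideal_2[OF P] by (simp add: numeral_2_eq_2)
    then show ?thesis by (rule uniformizer_spanI)
  next
    case False
    then have "X_var - bconst (fst P) - bconst 1 * uniformizer P ^ 1 \<in> order_ideal P (Suc 1)"
      using zero by (simp add: uniformizer_def)
    then show ?thesis by (rule uniformizer_spanI)
  qed
  moreover have "Y_var - bconst (snd P) \<in> uniformizer_span P 1"
  proof (cases "snd P = 0")
    case True
    then have "Y_var - bconst (snd P) - bconst 1 * uniformizer P ^ 1 \<in> order_ideal P (Suc 1)"
      using zero by (simp add: uniformizer_def)
    then show ?thesis by (rule uniformizer_spanI)
  qed (rule Y_minus_in_uniformizer_span[OF P])
  moreover have "curve_eq h - bconst 0 * uniformizer P ^ 1 \<in> order_ideal P (Suc 1)"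
    using I_C_in_order_ideal[OF curve_eq_in_I_C] by simp
  then have "curve_eq h \<in> uniformizer_span P 1" by (rule uniformizer_spanI)
  ultimately show "{X_var - [:[:fst P:]:], Y_var - [:[:snd P:]:], curve_eq h} \<subseteq> uniformizer_span P 1"
    by (simp add: bconst_def)
qed

lemma ideal_pow_subset_uniformizer_span:
  assumes P: "on_curve h P"
  shows "ideal_pow (I_pt h P) m \<subseteq> uniformizer_span P m"
proof (induction m)
  case 0
  show ?case
  proof
    fix F
    obtain c where "F - bconst c \<in> I_pt h P" using const_mod_I_pt by blast
    then have "F - bconst c * uniformizer P ^ 0 \<in> order_ideal P (Suc 0)"
      using I_pt_in_order_ideal_1 by simp
    then show "F \<in> uniformizer_span P 0" by (rule uniformizer_spanI)
  qed
next
  case (Suc m)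
  show ?case
  proof (simp, rule ideal_prod_least[OF _ is_ideal_uniformizer_span])
    fix i w assume i: "i \<in> I_pt h P" and w: "w \<in> ideal_pow (I_pt h P) m"
    have "i \<in> uniformizer_span P 1" using I_pt_subset_uniformizer_span[OF P] i by blast
    then obtain c1 where "i - bconst c1 * uniformizer P ^ 1 \<in> order_ideal P (Suc 1)"
      by (rule uniformizer_spanE)
    then have c1: "i - bconst c1 * uniformizer P \<in> order_ideal P 2" by (simp add: numeral_2_eq_2)
    have "w \<in> uniformizer_span P m" using Suc.IH w by blast
    then obtain c2 where c2: "w - bconst c2 * uniformizer P ^ m \<in> order_ideal P (Suc m)"
      by (rule uniformizer_spanE)
    have "(i - bconst c1 * uniformizer P) * w \<in> order_ideal P (2 + m)"
      by (rule order_ideal_mult[OF c1 ideal_pow_in_order_ideal[OF w]])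
    moreover have "bconst c1 * uniformizer P \<in> order_ideal P 1"
      by (rule ideal_mult_left[OF is_ideal_order_ideal I_pt_in_order_ideal_1[OF uniformizer_in_I_pt]])
    then have "(bconst c1 * uniformizer P) * (w - bconst c2 * uniformizer P ^ m) \<in> order_ideal P (1 + Suc m)"
      by (rule order_ideal_mult[OF _ c2])
    ultimately have "(i - bconst c1 * uniformizer P) * w
        + (bconst c1 * uniformizer P) * (w - bconst c2 * uniformizer P ^ m) \<in> order_ideal P (Suc (Suc m))"
      using ideal_add[OF is_ideal_order_ideal] by simp
    moreover have "(i - bconst c1 * uniformizer P) * w
        + (bconst c1 * uniformizer P) * (w - bconst c2 * uniformizer P ^ m)
      = i * w - bconst (c1 * c2) * uniformizer P ^ Suc m"
      by (simp add: bconst_mult algebra_simps)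
    ultimately have "i * w - bconst (c1 * c2) * uniformizer P ^ Suc m \<in> order_ideal P (Suc (Suc m))"
      by simp
    then show "i * w \<in> uniformizer_span P (Suc m)" by (rule uniformizer_spanI)
  qed
qed

lemma order_ideal_subset_uniformizer_span:
  assumes P: "on_curve h P"
  shows "order_ideal P m \<subseteq> uniformizer_span P m"
  unfolding order_ideal_eq
proof (rule gen_ideal_least[OF _ is_ideal_uniformizer_span])
  have "F \<in> uniformizer_span P m" if "F \<in> I_C h" for F
    using I_C_in_order_ideal[OF that] by (intro uniformizer_spanI[of F 0]) simp
  then show "ideal_pow (I_pt h P) m \<union> I_C h \<subseteq> uniformizer_span P m"
    using ideal_pow_subset_uniformizer_span[OF P] by blast
qed

lemma order_ideal_iff_fps_X_power_dvd: assumes P: "on_curve h P"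
  shows "F \<in> order_ideal P m \<longleftrightarrow> fps_X ^ m dvd expand P F"
proof
  show "F \<in> order_ideal P m \<Longrightarrow> fps_X ^ m dvd expand P F"
    by (rule fps_X_power_dvd_expand_order_ideal[OF P])
next
  show "fps_X ^ m dvd expand P F \<Longrightarrow> F \<in> order_ideal P m"
  proof (induction m)
    case 0 then show ?case by (simp add: order_ideal_0)
  next
    case (Suc m)
    have "fps_X ^ m dvd (fps_X ^ Suc m :: complex fps)" by (simp add: le_imp_power_dvd)
    then have "F \<in> order_ideal P m" using Suc dvd_trans by blast
    then obtain c where c: "F - bconst c * uniformizer P ^ m \<in> order_ideal P (Suc m)"
      using order_ideal_subset_uniformizer_span[OF P] uniformizer_spanE by blast
    obtain U where U: "expand P (uniformizer P) = fps_X * U" "U $ 0 \<noteq> 0"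
      using expand_uniformizer[OF P] by blast
    have "fps_X ^ Suc m dvd expand P (F - bconst c * uniformizer P ^ m)"
      by (rule fps_X_power_dvd_expand_order_ideal[OF P c])
    then have "fps_X ^ Suc m dvd expand P F - expand P (F - bconst c * uniformizer P ^ m)"
      by (rule dvd_diff[OF Suc.prems])
    also have "expand P F - expand P (F - bconst c * uniformizer P ^ m) = fps_X ^ m * (fps_const c * U ^ m)"
      by (simp add: expand_diff expand_mult expand_power U(1) power_mult_distrib algebra_simps)
    finally have "(fps_X ^ m * (fps_const c * U ^ m)) $ m = 0"
      unfolding fps_X_power_dvd_iff_nth by simp
    then have "c * (U $ 0) ^ m = 0" by (simp add: fps_X_power_mult_nth fps_power_zeroth)
    then have "c = 0" using U(2) by simp
    then show ?case using c by simp
  qed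
qed

definition ord_at :: "point \<Rightarrow> bpoly \<Rightarrow> nat" where "ord_at P F = subdegree (expand P F)"

lemma order_ideal_iff_ord_at: assumes P: "on_curve h P" and F: "F \<notin> I_C h"
  shows "F \<in> order_ideal P m \<longleftrightarrow> m \<le> ord_at P F"
  using expand_eq_0_iff[OF P, of F] F
    by (simp add: order_ideal_iff_fps_X_power_dvd[OF P] fps_X_power_dvd_iff ord_at_def)

lemma ord_fin_eq_ord_at: assumes P: "on_curve h P" and F: "F \<notin> I_C h"
  shows "ord_fin h P F = ord_at P F"
  unfolding ord_fin_def
proof (rule Greatest_equality)
  show "F \<in> gen_ideal (ideal_pow (I_pt h P) (ord_at P F) \<union> I_C h)"
    using order_ideal_iff_ord_at[OF P F] by (simp add: order_ideal_def ideal_pow_plus_def)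
  show "y \<le> ord_at P F" if "F \<in> gen_ideal (ideal_pow (I_pt h P) y \<union> I_C h)" for y
    using that order_ideal_iff_ord_at[OF P F] by (simp add: order_ideal_def ideal_pow_plus_def)
qed

lemma on_curve_over_0: "on_curve h (0, csqrt (poly h 0))"
  by (simp add: on_curve_def)

lemma mult_notin_I_C: assumes "F \<notin> I_C h" "G \<notin> I_C h" shows "F * G \<notin> I_C h"
proof -
  let ?P = "(0, csqrt (poly h 0))"
  have "expand ?P F \<noteq> 0" "expand ?P G \<noteq> 0"
    using assms expand_eq_0_iff[OF on_curve_over_0] by blast+
  then have "expand ?P (F * G) \<noteq> 0" by (simp add: expand_mult)
  then show ?thesis using expand_eq_0_iff[OF on_curve_over_0] by blast
qed

lemma ord_at_mult: assumes P: "on_curve h P" and "F \<notin> I_C h" "G \<notin> I_C h"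
  shows "ord_at P (F * G) = ord_at P F + ord_at P G"
  using assms expand_eq_0_iff[OF P] by (simp add: ord_at_def expand_mult)

lemma ord_at_I_C_diff: assumes P: "on_curve h P" and d: "F - G \<in> I_C h"
  shows "ord_at P F = ord_at P G"
  using expand_I_C[OF P d] by (simp add: ord_at_def expand_diff)

lemma order_ideal_I_C_diff:
  "F - G \<in> I_C h \<Longrightarrow> F \<in> order_ideal P m \<longleftrightarrow> G \<in> order_ideal P m"
  using ideal_diff[OF is_ideal_order_ideal _ I_C_in_order_ideal, of F P m "F - G"]
    ideal_add[OF is_ideal_order_ideal _ I_C_in_order_ideal, of G P m "F - G"] by auto

lemma order_ideal_mult_cancel:
  assumes Q: "on_curve h Q" and A: "A \<notin> I_C h" and AB: "A * B \<in> order_ideal Q (ord_at Q A + k)"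
  shows "B \<in> order_ideal Q k"
proof (cases "B \<in> I_C h")
  case False
  then have "ord_at Q A + k \<le> ord_at Q A + ord_at Q B"
    using AB order_ideal_iff_ord_at[OF Q mult_notin_I_C[OF A False]] ord_at_mult[OF Q A False] by simp
  then show ?thesis using order_ideal_iff_ord_at[OF Q False] by simp
qed (rule I_C_in_order_ideal)

definition ram_index :: "point \<Rightarrow> nat" where "ram_index P = (if snd P = 0 then 2 else 1)"

lemma ord_at_const: assumes P: "on_curve h P" and c: "c \<noteq> 0"
  shows "ord_at P [:c:] = ram_index P * order (fst P) c"
proof -
  define x0 where "x0 = fst P"
  obtain q where q: "c = [:- x0, 1:] ^ order x0 c * q" "\<not> [:- x0, 1:] dvd q"
    using order_decomp[OF c] by blast
  have q0: "poly q x0 \<noteq> 0" using q(2) poly_eq_0_iff_dvd by blast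
  have lin: "pcompose [:- x0, 1:] (local_x P) = [:0, 1:] ^ ram_index P"
    by (simp add: local_x_def ram_index_def x0_def pcompose_pCons numeral_2_eq_2)
  have "pcompose c (local_x P) = [:0, 1:] ^ (ram_index P * order x0 c) * pcompose q (local_x P)"
    by (subst q(1)) (simp add: pcompose_mult pcompose_power_left lin power_mult mult.commute)
  moreover have "poly (pcompose q (local_x P)) 0 \<noteq> 0"
    using q0 by (simp add: poly_pcompose local_x_def x0_def)
  ultimately have "order 0 (pcompose c (local_x P)) = ram_index P * order x0 c"
  proof -
    assume e: "pcompose c (local_x P) = [:0, 1:] ^ (ram_index P * order x0 c) * pcompose q (local_x P)"
      and n: "poly (pcompose q (local_x P)) 0 \<noteq> 0"
    have qn: "pcompose q (local_x P) \<noteq> 0" using n by auto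
    have "order 0 (pcompose c (local_x P))
        = order 0 ([:0, 1:] ^ (ram_index P * order x0 c) :: complex poly) + order 0 (pcompose q (local_x P))"
      unfolding e by (rule Polynomial.order_mult) (use qn in simp)
    also have "order 0 ([:0, 1:] ^ (ram_index P * order x0 c) :: complex poly) = ram_index P * order x0 c"
      using order_power_n_n[of 0 "ram_index P * order x0 c"] by simp
    also have "order 0 (pcompose q (local_x P)) = 0" using n by (simp add: order_0I)
    finally show ?thesis by simp
  qed
  moreover have "pcompose c (local_x P) \<noteq> 0" using c pcompose_eq_0 degree_local_x by blast
  ultimately show ?thesis
    by (simp add: ord_at_def expand_const expand_poly_def subdegree_fps_of_poly x0_def)
qed

lemma ord_at_linear: assumes Q: "on_curve h Q"
  shows "ord_at Q [:[:- a, 1:]:] = (if fst Q = a then ram_index Q else 0)"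
  using ord_at_const[OF Q, of "[:- a, 1:]"] order_power_n_n[of a 1]
  by (auto simp: order_0I)

lemma conj_bp_in_I_C: "F \<in> I_C h \<Longrightarrow> conj_bp F \<in> I_C h"
  unfolding I_C_def by (rule conj_bp_gen_ideal[OF is_ideal_gen_ideal]) (auto intro: gen_ideal.gen)

lemma conj_bp_in_I_C_iff: "conj_bp F \<in> I_C h \<longleftrightarrow> F \<in> I_C h"
  using conj_bp_in_I_C conj_bp_conj_bp by metis

lemma conj_bp_I_pt: "F \<in> I_pt h P \<Longrightarrow> conj_bp F \<in> I_pt h (iota P)"
proof (rule conj_bp_gen_ideal[OF is_ideal_I_pt,
      where S = "{X_var - [:[:fst P:]:], Y_var - [:[:snd P:]:], curve_eq h}"])
  fix s assume "s \<in> {X_var - [:[:fst P:]:], Y_var - [:[:snd P:]:], curve_eq h}"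
  moreover have "conj_bp (X_var - [:[:fst P:]:]) \<in> I_pt h (iota P)"
    using X_minus_in_I_pt[of "iota P"] by (simp add: conj_bp_diff bconst_def)
  moreover have "conj_bp (Y_var - [:[:snd P:]:]) = - (Y_var - bconst (snd (iota P)))"
    by (simp add: conj_bp_diff bconst_def)
  then have "conj_bp (Y_var - [:[:snd P:]:]) \<in> I_pt h (iota P)"
    using ideal_uminus[OF is_ideal_I_pt Y_minus_in_I_pt[of "iota P"]] by simp
  moreover have "conj_bp (curve_eq h) \<in> I_pt h (iota P)" using curve_eq_in_I_pt by simp
  ultimately show "conj_bp s \<in> I_pt h (iota P)" by blast
qed (simp add: I_pt_def)

lemma conj_bp_ideal_pow: "F \<in> ideal_pow (I_pt h P) m \<Longrightarrow> conj_bp F \<in> ideal_pow (I_pt h (iota P)) m"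
proof (induction m arbitrary: F)
  case 0 then show ?case by simp
next
  case (Suc m)
  have "F \<in> gen_ideal {a * b |a b. a \<in> I_pt h P \<and> b \<in> ideal_pow (I_pt h P) m}"
    using Suc.prems by (simp add: ideal_prod_def)
  then show ?case
  proof (rule conj_bp_gen_ideal[OF is_ideal_ideal_pow, rotated])
    fix s assume "s \<in> {a * b |a b. a \<in> I_pt h P \<and> b \<in> ideal_pow (I_pt h P) m}"
    then obtain a b where "s = a * b" "a \<in> I_pt h P" "b \<in> ideal_pow (I_pt h P) m" by blast
    then show "conj_bp s \<in> ideal_pow (I_pt h (iota P)) (Suc m)"
      using conj_bp_I_pt Suc.IH by (simp add: conj_bp_mult ideal_prod_mem)
  qed
qed

lemma conj_bp_order_ideal: "F \<in> order_ideal P m \<Longrightarrow> conj_bp F \<in> order_ideal (iota P) m"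
  unfolding order_ideal_eq
  by (rule conj_bp_gen_ideal[OF is_ideal_gen_ideal])
    (auto intro: gen_ideal.gen conj_bp_ideal_pow conj_bp_in_I_C)

lemma conj_bp_order_ideal_iff: "conj_bp F \<in> order_ideal (iota P) m \<longleftrightarrow> F \<in> order_ideal P m"
  using conj_bp_order_ideal[of F P m] conj_bp_order_ideal[of "conj_bp F" "iota P" m] by auto

lemma ord_at_iota_conj_bp: assumes P: "on_curve h P" and F: "F \<notin> I_C h"
  shows "ord_at (iota P) (conj_bp F) = ord_at P F"
proof -
  have F': "conj_bp F \<notin> I_C h" using F conj_bp_in_I_C_iff by blast
  have P': "on_curve h (iota P)" using P by simp
  have "m \<le> ord_at (iota P) (conj_bp F) \<longleftrightarrow> m \<le> ord_at P F" for m
    using order_ideal_iff_ord_at[OF P' F'] order_ideal_iff_ord_at[OF P F] conj_bp_order_ideal_iff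
      by blast
  then show ?thesis by (meson le_antisym order_refl)
qed

lemma ord_at_conj_bp: assumes P: "on_curve h P" and F: "F \<notin> I_C h"
  shows "ord_at P (conj_bp F) = ord_at (iota P) F"
  using ord_at_iota_conj_bp[of "iota P" F] P F by simp

section \<open>Norms and the divisor at infinity\<close>

definition curve_norm :: "bpoly \<Rightarrow> complex poly" where
  "curve_norm F =
    coeff (curve_rem F) 0 * coeff (curve_rem F) 0 - h * (coeff (curve_rem F) 1 * coeff (curve_rem F) 1)"

lemma curve_rem_linear: "curve_rem F = [:coeff (curve_rem F) 0, coeff (curve_rem F) 1:]"
  by (rule poly_degree_le_1_eq[OF degree_curve_rem])

lemma curve_norm_linear: "[:p, q:] * conj_bp [:p, q:] - [:p * p - h * (q * q):] = [:- (q * q):] * curve_eq h"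
  by (simp add: conj_bp_linear curve_eq_def algebra_simps)

lemma curve_norm_mod_I_C: "F * conj_bp F - [:curve_norm F:] \<in> I_C h"
proof -
  define p q where "p = coeff (curve_rem F) 0" and "q = coeff (curve_rem F) 1"
  have R: "curve_rem F = [:p, q:]" unfolding p_def q_def by (rule curve_rem_linear)
  have d: "F - [:p, q:] \<in> I_C h" using curve_rem_diff_in_I_C[of F] R by simp
  have d': "conj_bp F - conj_bp [:p, q:] \<in> I_C h"
    using conj_bp_in_I_C[OF d] by (simp add: conj_bp_diff)
  have "F * conj_bp F - [:curve_norm F:] = (F - [:p, q:]) * conj_bp F + [:p, q:] * (conj_bp F - conj_bp [:p, q:])
      + ([:p, q:] * conj_bp [:p, q:] - [:p * p - h * (q * q):])"
    unfolding curve_norm_def p_def[symmetric] q_def[symmetric] by (simp add: algebra_simps)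
  also have "\<dots> \<in> I_C h"
    unfolding curve_norm_linear using d d' curve_eq_in_I_C
    by (intro ideal_add[OF is_ideal_I_C] ideal_mult_left[OF is_ideal_I_C] ideal_mult_right[OF is_ideal_I_C])
  finally show ?thesis .
qed

lemma curve_norm_unique: "F * conj_bp F - [:c:] \<in> I_C h \<Longrightarrow> c = curve_norm F"
proof -
  assume a: "F * conj_bp F - [:c:] \<in> I_C h"
  have "(F * conj_bp F - [:curve_norm F:]) - (F * conj_bp F - [:c:]) \<in> I_C h"
    using a curve_norm_mod_I_C ideal_diff[OF is_ideal_I_C] by blast
  then have "[:c - curve_norm F:] \<in> I_C h" by simp
  then show ?thesis using const_in_I_C[of "c - curve_norm F"] by simp
qed

lemma curve_norm_mult: "curve_norm (F * G) = curve_norm F * curve_norm G"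
proof -
  have "(F * G) * conj_bp (F * G) - [:curve_norm F * curve_norm G:] =
      (F * conj_bp F - [:curve_norm F:]) * (G * conj_bp G) + [:curve_norm F:] * (G * conj_bp G - [:curve_norm G:])"
    by (simp add: conj_bp_mult algebra_simps)
  also have "\<dots> \<in> I_C h" using curve_norm_mod_I_C
    by (intro ideal_add[OF is_ideal_I_C] ideal_mult_left[OF is_ideal_I_C] ideal_mult_right[OF is_ideal_I_C])
  finally show ?thesis by (rule curve_norm_unique[symmetric])
qed

lemma curve_norm_conj_bp: "curve_norm (conj_bp F) = curve_norm F"
proof -
  have "conj_bp F * conj_bp (conj_bp F) - [:curve_norm F:] = conj_bp (F * conj_bp F - [:curve_norm F:])"
    by (simp add: conj_bp_mult conj_bp_diff mult.commute)
  also have "\<dots> \<in> I_C h" by (rule conj_bp_in_I_C[OF curve_norm_mod_I_C])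
  finally show ?thesis by (rule curve_norm_unique[symmetric])
qed

lemma curve_norm_const: "curve_norm [:c:] = c * c"
proof -
  have "[:c:] * conj_bp [:c:] - [:c * c:] = 0" by simp
  then show ?thesis using curve_norm_unique[of "[:c:]" "c * c"] ideal_0[OF is_ideal_I_C] by simp
qed

lemma curve_norm_I_C_diff: "F - G \<in> I_C h \<Longrightarrow> curve_norm F = curve_norm G"
proof -
  assume d: "F - G \<in> I_C h"
  have "F * conj_bp F - [:curve_norm G:]
      = (F - G) * conj_bp F + G * conj_bp (F - G) + (G * conj_bp G - [:curve_norm G:])"
    by (simp add: conj_bp_diff algebra_simps)
  also have "\<dots> \<in> I_C h" using d curve_norm_mod_I_C conj_bp_in_I_C[OF d]
    by (intro ideal_add[OF is_ideal_I_C] ideal_mult_left[OF is_ideal_I_C] ideal_mult_right[OF is_ideal_I_C])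
  finally show ?thesis by (rule curve_norm_unique[symmetric])
qed

lemma curve_norm_nonzero: "F \<notin> I_C h \<Longrightarrow> curve_norm F \<noteq> 0"
proof -
  assume F: "F \<notin> I_C h"
  define p q where "p = coeff (curve_rem F) 0" and "q = coeff (curve_rem F) 1"
  have R: "curve_rem F = [:p, q:]" unfolding p_def q_def by (rule curve_rem_linear)
  have "curve_rem F \<noteq> 0" using F I_C_iff_curve_rem by blast
  then have pq: "\<not> (p = 0 \<and> q = 0)" using R by auto
  have e: "curve_norm F = p * p - h * (q * q)" unfolding curve_norm_def p_def q_def ..
  show ?thesis
  proof
    assume "curve_norm F = 0"
    then have "p * p = h * (q * q)" using e by simp
    then show False using square_eq_h_times_square pq by blast
  qed
qed

lemma ord_at_curve_norm: assumes P: "on_curve h P" and F: "F \<notin> I_C h"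
  shows "ord_at P [:curve_norm F:] = ord_at P F + ord_at (iota P) F"
proof -
  have F': "conj_bp F \<notin> I_C h" using F conj_bp_in_I_C_iff by blast
  have "ord_at P [:curve_norm F:] = ord_at P (F * conj_bp F)"
    using ord_at_I_C_diff[OF P curve_norm_mod_I_C[of F]] by simp
  also have "\<dots> = ord_at P F + ord_at P (conj_bp F)" by (rule ord_at_mult[OF P F F'])
  finally show ?thesis using ord_at_conj_bp[OF P F] by simp
qed

lemma on_curve_same_x: assumes "on_curve h P" "on_curve h Q" "fst Q = fst P"
  shows "Q = P \<or> Q = iota P"
proof -
  have "(snd Q)^2 = (snd P)^2" using assms by (simp add: on_curve_def)
  then have "snd Q = snd P \<or> snd Q = - snd P" by (simp add: power2_eq_iff)
  then show ?thesis using assms(3) by (cases P, cases Q) (auto simp: iota_def)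
qed

definition fibre :: "complex \<Rightarrow> point set" where "fibre x = {P. on_curve h P \<and> fst P = x}"

lemma fibre_eq: "fibre x = {(x, csqrt (poly h x)), (x, - csqrt (poly h x))}"
proof -
  have "on_curve h (x, csqrt (poly h x))" by (simp add: on_curve_def)
  then show ?thesis using on_curve_same_x[of "(x, csqrt (poly h x))"]
    by (auto simp: fibre_def iota_def on_curve_def)
qed

lemma finite_fibre: "finite (fibre x)" by (simp add: fibre_eq)

lemma sum_fibre: "(\<Sum>P\<in>fibre x. ram_index P * k) = 2 * k"
proof (cases "csqrt (poly h x) = 0")
  case True
  then show ?thesis by (simp add: fibre_eq ram_index_def)
next
  case False
  then have "(x, csqrt (poly h x)) \<noteq> (x, - csqrt (poly h x))" by simp
  then show ?thesis using False by (simp add: fibre_eq ram_index_def)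
qed

definition points_over_roots :: "complex poly \<Rightarrow> point set" where
  "points_over_roots N = {P. on_curve h P \<and> poly N (fst P) = 0}"

lemma points_over_roots_UN: "points_over_roots N = (\<Union>x\<in>{x. poly N x = 0}. fibre x)"
  by (auto simp: points_over_roots_def fibre_def)

lemma finite_points_over_roots: "N \<noteq> 0 \<Longrightarrow> finite (points_over_roots N)"
  unfolding points_over_roots_UN using poly_roots_finite finite_fibre by blast

lemma points_over_roots_iota: "P \<in> points_over_roots N \<Longrightarrow> iota P \<in> points_over_roots N"
  by (simp add: points_over_roots_def)

lemma sum_points_over_roots: assumes "N \<noteq> 0"
  shows "(\<Sum>P\<in>points_over_roots N. ram_index P * order (fst P) N) = 2 * degree N"
proof -
  have "(\<Sum>P\<in>points_over_roots N. ram_index P * order (fst P) N)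
      = (\<Sum>x\<in>{x. poly N x = 0}. \<Sum>P\<in>fibre x. ram_index P * order (fst P) N)"
    unfolding points_over_roots_UN using poly_roots_finite[OF assms] finite_fibre
    by (intro sum.UNION_disjoint) (auto simp: fibre_def)
  also have "\<dots> = (\<Sum>x\<in>{x. poly N x = 0}. 2 * order x N)"
  proof (intro sum.cong refl)
    fix x
    have "(\<Sum>P\<in>fibre x. ram_index P * order (fst P) N) = (\<Sum>P\<in>fibre x. ram_index P * order x N)"
      by (intro sum.cong refl) (simp add: fibre_def)
    then show "(\<Sum>P\<in>fibre x. ram_index P * order (fst P) N) = 2 * order x N"
      using sum_fibre by simp
  qed
  also have "\<dots> = 2 * degree N"
    using sum_order_roots[OF assms] by (simp add: sum_distrib_left[symmetric])
  finally show ?thesis .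
qed

lemma ord_at_nonzero_over_root: assumes P: "on_curve h P" and F: "F \<notin> I_C h" and nz: "ord_at P F \<noteq> 0"
  shows "P \<in> points_over_roots (curve_norm F)"
proof -
  have "ord_at P [:curve_norm F:] \<noteq> 0" using ord_at_curve_norm[OF P F] nz by simp
  then have "order (fst P) (curve_norm F) \<noteq> 0"
    using ord_at_const[OF P curve_norm_nonzero[OF F]] by simp
  then show ?thesis using P curve_norm_nonzero[OF F] order_root by (auto simp: points_over_roots_def)
qed

lemma
  assumes F: "F \<notin> I_C h"
  shows finite_support_ord_at: "finite {P. on_curve h P \<and> ord_at P F \<noteq> 0}"
    and sum_ord_at: "(\<Sum>P\<in>{P. on_curve h P \<and> ord_at P F \<noteq> 0}. ord_at P F) = degree (curve_norm F)"
proof -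
  let ?N = "curve_norm F"
  have N: "?N \<noteq> 0" by (rule curve_norm_nonzero[OF F])
  have sub: "{P. on_curve h P \<and> ord_at P F \<noteq> 0} \<subseteq> points_over_roots ?N"
    using ord_at_nonzero_over_root[OF _ F] by auto
  show fin: "finite {P. on_curve h P \<and> ord_at P F \<noteq> 0}"
    using finite_points_over_roots[OF N] sub finite_subset by blast
  have "(\<Sum>P\<in>{P. on_curve h P \<and> ord_at P F \<noteq> 0}. ord_at P F) = (\<Sum>P\<in>points_over_roots ?N. ord_at P F)"
    using finite_points_over_roots[OF N] sub
      by (intro sum.mono_neutral_left) (auto simp: points_over_roots_def)
  moreover have "(\<Sum>P\<in>points_over_roots ?N. ord_at (iota P) F) = (\<Sum>P\<in>points_over_roots ?N. ord_at P F)"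
    using sum_reindex_iota[OF finite_points_over_roots[OF N] points_over_roots_iota] .
  moreover have "(\<Sum>P\<in>points_over_roots ?N. ord_at P F + ord_at (iota P) F) = 2 * degree ?N"
  proof -
    have "(\<Sum>P\<in>points_over_roots ?N. ord_at P F + ord_at (iota P) F)
        = (\<Sum>P\<in>points_over_roots ?N. ram_index P * order (fst P) ?N)"
      by (intro sum.cong refl)
        (simp add: points_over_roots_def ord_at_curve_norm[OF _ F, symmetric] ord_at_const[OF _ N])
    then show ?thesis using sum_points_over_roots[OF N] by simp
  qed
  ultimately show "(\<Sum>P\<in>{P. on_curve h P \<and> ord_at P F \<noteq> 0}. ord_at P F) = degree ?N"
    by (simp add: sum.distrib)
qed

lemma degree_norm_form:
  "degree (p * p - h * (q * q)) = max (2 * degree p) (if q = 0 then 0 else 2 * degree q + (2 * g + 1))"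
proof -
  have dp: "degree (p * p) = 2 * degree p" by (cases "p = 0") (simp_all add: degree_mult_eq)
  show ?thesis
  proof (cases "q = 0")
    case False
    then have "degree (h * (q * q)) = 2 * degree q + (2 * g + 1)"
      using h_nonzero deg_h by (simp add: degree_mult_eq)
    moreover have "2 * degree p \<noteq> 2 * degree q + (2 * g + 1)" by presburger
    ultimately show ?thesis using False dp degree_diff_eq_max[of "p * p" "h * (q * q)"] by simp
  qed (simp add: dp)
qed

lemma deg_w_eq_degree_curve_norm: assumes "degree F \<le> 1" "F \<notin> I_C h"
  shows "deg_w g F = degree (curve_norm F)"
proof -
  have F: "F = [:coeff F 0, coeff F 1:]" by (rule poly_degree_le_1_eq[OF assms(1)])
  have "F \<noteq> 0" using assms(2) ideal_0[OF is_ideal_I_C] by auto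
  then have nz: "[:coeff F 0, coeff F 1:] \<noteq> 0" using F by metis
  have "deg_w g F = deg_w g [:coeff F 0, coeff F 1:]" using F by metis
  then have "deg_w g F = degree (coeff F 0 * coeff F 0 - h * (coeff F 1 * coeff F 1))"
    using deg_w_linear[OF nz] degree_norm_form by simp
  also have "\<dots> = degree (curve_norm F)"
    using curve_rem_eq_self[OF assms(1)] by (simp add: curve_norm_def)
  finally show ?thesis .
qed

lemma ord_inf_eq_degree_curve_norm: assumes "F \<notin> I_C h"
  shows "ord_inf g h F = - int (degree (curve_norm F))"
proof -
  have "pseudo_mod F (curve_eq h) = curve_rem F" by (simp add: curve_rem_def)
  moreover have "curve_rem F \<notin> I_C h"
    using assms curve_rem_diff_in_I_C[of F] ideal_add[OF is_ideal_I_C] by force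
  ultimately show ?thesis
    using deg_w_eq_degree_curve_norm[OF degree_curve_rem, of F]
      curve_norm_I_C_diff[OF curve_rem_diff_in_I_C[of F]]
    by (simp add: ord_inf_def)
qed

lemma div_of_Some: "on_curve h P \<Longrightarrow> F \<notin> I_C h \<Longrightarrow> div_of g h F (Some P) = int (ord_at P F)"
  by (simp add: div_of_def ord_fin_eq_ord_at)

lemma div_of_Some_off_curve: "\<not> on_curve h P \<Longrightarrow> div_of g h F (Some P) = 0"
  by (simp add: div_of_def)

lemma div_of_None: "F \<notin> I_C h \<Longrightarrow> div_of g h F None = - int (degree (curve_norm F))"
  by (simp add: div_of_def ord_inf_eq_degree_curve_norm)

section \<open>Division by polynomials in x\<close>

lemma linear_form_root_unramified:
  assumes "poly h a \<noteq> 0" and vanish: "\<And>Q. on_curve h Q \<Longrightarrow> fst Q = a \<Longrightarrow> expand Q [:p, q:] $ 0 = 0"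
  shows "poly p a = 0 \<and> poly q a = 0"
proof -
  define s where "s = csqrt (poly h a)"
  have s0: "s \<noteq> 0" using assms(1) by (simp add: s_def)
  have "poly p a + s * poly q a = 0" "poly p a - s * poly q a = 0"
    using vanish[of "(a, s)"] vanish[of "(a, - s)"]
      by (simp_all add: on_curve_def s_def expand_linear_nth_0)
  then have "2 * s * poly q a = 0" by (simp add: algebra_simps)
  then show ?thesis using s0 \<open>poly p a + s * poly q a = 0\<close> by simp
qed

lemma linear_form_root_branch:
  assumes h0: "poly h a = 0" and dvd: "fps_X ^ 2 dvd expand (a, 0) [:p, q:]"
  shows "poly p a = 0 \<and> poly q a = 0"
proof -
  have c0: "expand (a, 0) [:p, q:] $ 0 = 0" and c1: "expand (a, 0) [:p, q:] $ 1 = 0"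
    using dvd unfolding fps_X_power_dvd_iff_nth by auto
  from c0 have p0: "poly p a = 0" by (simp add: expand_linear_nth_0)
  have "pcompose p [:a, 0, 1:] = pcompose (pcompose p [:a, 1:]) [:0, 0, 1:]"
    by (simp add: pcompose_assoc[symmetric] pcompose_pCons)
  then have "expand_poly (a, 0) p $ 1 = 0"
    by (simp add: expand_poly_def local_x_def coeff_1_pcompose_square)
  moreover have "(local_y (a, 0) * expand_poly (a, 0) q) $ 1 = branch_sqrt a $ 0 * poly q a"
    by (simp add: local_y_def mult.assoc expand_poly_nth_0 fps_mult_nth_0)
  ultimately have "branch_sqrt a $ 0 * poly q a = 0" using c1 by (simp add: expand_linear)
  then show ?thesis using branch_sqrt_sq(2)[OF h0] p0 by simp
qed

lemma linear_form_root:
  assumes "\<And>Q. on_curve h Q \<Longrightarrow> fst Q = a \<Longrightarrow> fps_X ^ ram_index Q dvd expand Q [:p, q:]"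
  shows "poly p a = 0 \<and> poly q a = 0"
proof (cases "poly h a = 0")
  case True
  then show ?thesis using assms[of "(a, 0)"]
    by (intro linear_form_root_branch) (simp_all add: on_curve_def ram_index_def)
next
  case False
  then show ?thesis
  proof (rule linear_form_root_unramified)
    fix Q assume "on_curve h Q" "fst Q = a"
    moreover have "snd Q \<noteq> 0" using False calculation by (auto simp: on_curve_def)
    ultimately show "expand Q [:p, q:] $ 0 = 0"
      using assms[of Q] by (simp add: ram_index_def fps_X_dvd_iff)
  qed
qed

lemma divide_by_linear:
  assumes vanish: "\<And>Q. on_curve h Q \<Longrightarrow> fst Q = a \<Longrightarrow> \<Psi> \<in> order_ideal Q (ram_index Q)"
  shows "\<exists>\<Psi>'. \<Psi> - [:[:- a, 1:]:] * \<Psi>' \<in> I_C h"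
proof -
  define p q where "p = coeff (curve_rem \<Psi>) 0" and "q = coeff (curve_rem \<Psi>) 1"
  have R: "curve_rem \<Psi> = [:p, q:]" unfolding p_def q_def by (rule curve_rem_linear)
  have "fps_X ^ ram_index Q dvd expand Q [:p, q:]" if "on_curve h Q" "fst Q = a" for Q
    using order_ideal_iff_fps_X_power_dvd[OF that(1)] vanish[OF that] expand_curve_rem[OF that(1), of \<Psi>] R
    by simp
  then have "poly p a = 0 \<and> poly q a = 0" by (rule linear_form_root)
  then obtain p' q' where "p = [:- a, 1:] * p'" "q = [:- a, 1:] * q'"
    using poly_eq_0_iff_dvd by (metis dvdE)
  then have "curve_rem \<Psi> = [:[:- a, 1:]:] * [:p', q':]" using R by simp
  then have "\<Psi> - [:[:- a, 1:]:] * [:p', q':] \<in> I_C h"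
    using curve_rem_diff_in_I_C[of \<Psi>] by simp
  then show ?thesis by blast
qed

lemma divide_by_const:
  fixes c :: "complex poly"
  assumes "c \<noteq> 0" "\<And>Q. on_curve h Q \<Longrightarrow> \<Psi> \<in> order_ideal Q (ord_at Q [:c:])"
  shows "\<exists>\<phi>. \<Psi> - [:c:] * \<phi> \<in> I_C h"
  using assms
proof (induction "degree c" arbitrary: c \<Psi>)
  case 0
  then obtain k where k: "c = [:k:]" "k \<noteq> 0" by (metis degree_eq_zeroE pCons_eq_0_iff)
  then have "[:c:] * bconst (1 / k) = bconst (k * (1 / k))" by (simp add: bconst_def)
  then have "\<Psi> - [:c:] * (bconst (1 / k) * \<Psi>) = 0"
    using k(2) by (simp add: mult.assoc[symmetric])
  then show ?case using ideal_0[OF is_ideal_I_C] by metis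
next
  case (Suc n)
  obtain a c' where c': "c = [:- a, 1:] * c'" "c' \<noteq> 0" "n = degree c'"
    using complex_poly_linear_factor[OF Suc.hyps(2)[symmetric]] by metis
  define Xa where "Xa = ([:[:- a, 1:]:] :: bpoly)"
  have Xa: "Xa \<notin> I_C h" unfolding Xa_def by (rule const_notin_I_C) simp
  have cc: "[:c:] = Xa * [:c':]" by (simp add: Xa_def c'(1))
  have vc: "ord_at Q [:c:] = ord_at Q Xa + ord_at Q [:c':]" if "on_curve h Q" for Q
    unfolding cc by (rule ord_at_mult[OF that Xa const_notin_I_C[OF c'(2)]])
  have "\<Psi> \<in> order_ideal Q (ram_index Q)" if "on_curve h Q" "fst Q = a" for Q
    using order_ideal_antimono[of "ram_index Q" "ord_at Q [:c:]" Q] Suc.prems(2)[OF that(1)]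
      vc[OF that(1)] ord_at_linear[OF that(1)] that(2) by (auto simp: Xa_def)
  then obtain \<Psi>' where \<Psi>': "\<Psi> - Xa * \<Psi>' \<in> I_C h"
    using divide_by_linear unfolding Xa_def by blast
  have "\<Psi>' \<in> order_ideal Q (ord_at Q [:c':])" if Q: "on_curve h Q" for Q
    using order_ideal_mult_cancel[OF Q Xa] Suc.prems(2)[OF Q] order_ideal_I_C_diff[OF \<Psi>'] vc[OF Q]
    by simp
  then obtain \<phi> where \<phi>: "\<Psi>' - [:c':] * \<phi> \<in> I_C h"
    using Suc.hyps(1)[OF c'(3) c'(2)] by blast
  have "\<Psi> - [:c:] * \<phi> = (\<Psi> - Xa * \<Psi>') + Xa * (\<Psi>' - [:c':] * \<phi>)"
    by (simp add: cc algebra_simps)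
  also have "\<dots> \<in> I_C h"
    using \<Psi>' \<phi> by (intro ideal_add[OF is_ideal_I_C] ideal_mult_left[OF is_ideal_I_C])
  finally show ?case by blast
qed

section \<open>Ideals of functions vanishing on a divisor\<close>

definition vanishing_ideal :: "(point \<Rightarrow> nat) \<Rightarrow> bpoly set" where
  "vanishing_ideal A = {F. \<forall>P. on_curve h P \<longrightarrow> F \<in> order_ideal P (A P)}"

definition curve_ideal_prod :: "bpoly set \<Rightarrow> bpoly set \<Rightarrow> bpoly set" where
  "curve_ideal_prod X Y = gen_ideal (ideal_prod X Y \<union> I_C h)"

lemma is_ideal_vanishing_ideal: "is_ideal (vanishing_ideal A)"
  by (rule is_idealI) (auto simp: vanishing_ideal_def
      intro: ideal_0[OF is_ideal_order_ideal] ideal_add[OF is_ideal_order_ideal] ideal_mult_left[OF is_ideal_order_ideal])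

lemma I_C_in_vanishing_ideal: "F \<in> I_C h \<Longrightarrow> F \<in> vanishing_ideal A"
  by (simp add: vanishing_ideal_def I_C_in_order_ideal)

lemma is_ideal_curve_ideal_prod: "is_ideal (curve_ideal_prod X Y)"
  by (simp add: curve_ideal_prod_def is_ideal_gen_ideal)

lemma curve_ideal_prod_mult: "a \<in> X \<Longrightarrow> b \<in> Y \<Longrightarrow> a * b \<in> curve_ideal_prod X Y"
  unfolding curve_ideal_prod_def by (rule gen_ideal.gen) (simp add: ideal_prod_mem)

lemma I_C_in_curve_ideal_prod: "c \<in> I_C h \<Longrightarrow> c \<in> curve_ideal_prod X Y"
  unfolding curve_ideal_prod_def by (rule gen_ideal.gen) simp

lemma curve_ideal_prod_least: assumes "is_ideal T" "I_C h \<subseteq> T" "\<And>a b. a \<in> X \<Longrightarrow> b \<in> Y \<Longrightarrow> a * b \<in> T"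
  shows "curve_ideal_prod X Y \<subseteq> T"
  unfolding curve_ideal_prod_def
proof (rule gen_ideal_least[OF _ assms(1)])
  show "ideal_prod X Y \<union> I_C h \<subseteq> T" using ideal_prod_least[of X Y T] assms by blast
qed

lemma I_div_eq_vanishing_ideal: assumes "effective h A" shows "I_div h A = vanishing_ideal A"
proof
  show "I_div h A \<subseteq> vanishing_ideal A"
  proof
    fix F assume F: "F \<in> I_div h A"
    show "F \<in> vanishing_ideal A" unfolding vanishing_ideal_def
    proof (intro CollectI allI impI)
      fix P assume "on_curve h P"
      show "F \<in> order_ideal P (A P)"
      proof (cases "A P = 0")
        case True then show ?thesis by (simp add: order_ideal_0)
      next
        case False then show ?thesis using F unfolding I_div_def order_ideal_eq by blast
      qed
    qed
  qed
  show "vanishing_ideal A \<subseteq> I_div h A"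
    using assms by (auto simp: I_div_def vanishing_ideal_def effective_def order_ideal_eq)
qed

lemma vanishing_idealD: "F \<in> vanishing_ideal A \<Longrightarrow> on_curve h P \<Longrightarrow> F \<in> order_ideal P (A P)"
  unfolding vanishing_ideal_def by blast

lemma vanishing_ideal_iff_ord_at:
  "F \<notin> I_C h \<Longrightarrow> F \<in> vanishing_ideal A \<longleftrightarrow> (\<forall>P. on_curve h P \<longrightarrow> A P \<le> ord_at P F)"
  unfolding vanishing_ideal_def using order_ideal_iff_ord_at by blast

lemma vanishing_ideal_cong: "(\<And>P. on_curve h P \<Longrightarrow> A P = B P) \<Longrightarrow> vanishing_ideal A = vanishing_ideal B"
  unfolding vanishing_ideal_def by auto

lemma vanishing_ideal_mult:
  "a \<in> vanishing_ideal A \<Longrightarrow> b \<in> vanishing_ideal B \<Longrightarrow> a * b \<in> vanishing_ideal (\<lambda>P. A P + B P)"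
  unfolding vanishing_ideal_def using order_ideal_mult by blast

lemma I_pt_in_vanishing_ideal: "i \<in> I_pt h P0 \<Longrightarrow> i \<in> vanishing_ideal (\<lambda>P. of_bool (P = P0))"
  unfolding vanishing_ideal_def using I_pt_in_order_ideal_1[of i P0] by (auto simp: order_ideal_0)

lemma vanishing_ideal_divide:
  assumes u: "u \<notin> I_C h" and F: "F \<in> vanishing_ideal (\<lambda>P. ord_at P u + B P)"
    and c: "F - u * c \<in> I_C h"
  shows "c \<in> vanishing_ideal B"
  unfolding vanishing_ideal_def
proof (intro CollectI allI impI)
  fix P assume P: "on_curve h P"
  have "u * c \<in> order_ideal P (ord_at P u + B P)"
    using vanishing_idealD[OF F P] order_ideal_I_C_diff[OF c] by simp
  then show "c \<in> order_ideal P (B P)" by (rule order_ideal_mult_cancel[OF P u])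
qed

lemma X_minus_in_curve_ideal_prod_iota: assumes P: "on_curve h P"
  shows "X_var - bconst (fst P) \<in> curve_ideal_prod (I_pt h P) (I_pt h (iota P))"
proof (cases "snd P = 0")
  case True
  have h0: "poly h (fst P) = 0" using P True by (simp add: on_curve_def)
  have "- (bconst (poly (cofactor (fst P)) (fst P)) * (X_var - bconst (fst P)))
      \<in> curve_ideal_prod (I_pt h P) (I_pt h P)"
    using tangent_in_ideal[OF P is_ideal_curve_ideal_prod I_C_in_curve_ideal_prod[OF curve_eq_in_I_C]
        curve_ideal_prod_mult] True by simp
  then have "bconst (poly (cofactor (fst P)) (fst P)) * (X_var - bconst (fst P))
      \<in> curve_ideal_prod (I_pt h P) (I_pt h P)"
    using ideal_uminus[OF is_ideal_curve_ideal_prod] by fastforce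
  then show ?thesis using True iota_eq_iff[of P]
    by (auto intro: ideal_bconst_cancel[OF is_ideal_curve_ideal_prod cofactor_at_root_nonzero[OF h0]])
next
  case False
  define y0 u where "y0 = snd P" and "u = X_var - bconst (fst P)"
  have "Y_var - bconst (snd (iota P)) = Y_var + bconst y0" by (simp add: bconst_def y0_def)
  then have "Y_var + bconst y0 \<in> I_pt h (iota P)" using Y_minus_in_I_pt[of "iota P"] by metis
  moreover have "u \<in> I_pt h P" "u \<in> I_pt h (iota P)" "Y_var - bconst y0 \<in> I_pt h P"
    using X_minus_in_I_pt[of P] X_minus_in_I_pt[of "iota P"] Y_minus_in_I_pt[of P]
    by (simp_all add: u_def y0_def)
  ultimately have "u * (Y_var + bconst y0) - (Y_var - bconst y0) * u
      \<in> curve_ideal_prod (I_pt h P) (I_pt h (iota P))"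
    by (intro ideal_diff[OF is_ideal_curve_ideal_prod] curve_ideal_prod_mult)
  moreover have "u * (Y_var + bconst y0) - (Y_var - bconst y0) * u = bconst (2 * y0) * u"
    unfolding mult_2 bconst_add by (simp add: algebra_simps)
  ultimately have "bconst (2 * y0) * u \<in> curve_ideal_prod (I_pt h P) (I_pt h (iota P))" by simp
  then show ?thesis unfolding u_def
    by (rule ideal_bconst_cancel[OF is_ideal_curve_ideal_prod, rotated]) (simp add: y0_def False)
qed

lemma ord_at_X_minus:
  assumes P: "on_curve h P" and Q: "on_curve h Q"
  shows "ord_at Q (X_var - bconst (fst P)) = of_bool (Q = P) + of_bool (Q = iota P)"
proof (cases "fst Q = fst P")
  case True
  then have "Q = P \<or> Q = iota P" by (rule on_curve_same_x[OF P Q])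
  then show ?thesis using ord_at_linear[OF Q, of "fst P"] iota_eq_iff[of P]
    by (auto simp: X_minus_bconst ram_index_def)
next
  case False
  then show ?thesis using ord_at_linear[OF Q, of "fst P"] by (auto simp: X_minus_bconst)
qed

lemma mult_I_pt_iota_divide:
  assumes P0: "on_curve h P0" and b: "b \<in> vanishing_ideal (\<lambda>P. B P + of_bool (P = P0))"
    and j: "j \<in> I_pt h (iota P0)"
  shows "\<exists>c \<in> vanishing_ideal B. b * j - (X_var - bconst (fst P0)) * c \<in> I_C h"
proof -
  define u where "u = X_var - bconst (fst P0)"
  have u: "u \<notin> I_C h" unfolding u_def X_minus_bconst by (rule const_notin_I_C) simp
  have "b * j \<in> vanishing_ideal (\<lambda>P. B P + of_bool (P = P0) + of_bool (P = iota P0))"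
    by (rule vanishing_ideal_mult[OF b I_pt_in_vanishing_ideal[OF j]])
  also have "\<dots> = vanishing_ideal (\<lambda>P. ord_at P u + B P)"
    by (rule vanishing_ideal_cong) (simp add: u_def ord_at_X_minus[OF P0])
  finally have bj: "b * j \<in> vanishing_ideal (\<lambda>P. ord_at P u + B P)" .
  have "b * j \<in> order_ideal Q (ram_index Q)" if "on_curve h Q" "fst Q = fst P0" for Q
    using vanishing_idealD[OF bj that(1)] order_ideal_antimono[of "ram_index Q" "ord_at Q u + B Q" Q]
      ord_at_linear[OF that(1), of "fst P0"] that(2) by (auto simp: u_def X_minus_bconst)
  then obtain c where c: "b * j - u * c \<in> I_C h"
    using divide_by_linear[of "fst P0" "b * j"] unfolding u_def X_minus_bconst by blast
  then show ?thesis using vanishing_ideal_divide[OF u bj c] unfolding u_def by blast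
qed

text \<open>Since u = x - x(P0) lies in (I_P0 I_{\<iota> P0}, I_C) and each b j with j \<in> I_{\<iota> P0} is u times
  an element of I_B, the product b u lies in u (I_P0 I_B, I_C); then cancel u.\<close>

lemma vanishing_ideal_Suc:
  assumes P0: "on_curve h P0" and b: "b \<in> vanishing_ideal (\<lambda>P. B P + of_bool (P = P0))"
  shows "b \<in> curve_ideal_prod (I_pt h P0) (vanishing_ideal B)"
proof -
  define u K where "u = X_var - bconst (fst P0)" and "K = curve_ideal_prod (I_pt h P0) (vanishing_ideal B)"
  have u: "u \<notin> I_C h" unfolding u_def X_minus_bconst by (rule const_notin_I_C) simp
  define S where "S = {z. \<exists>w\<in>K. z - u * w \<in> I_C h}"
  have S: "is_ideal S" unfolding S_def K_def
    by (rule is_ideal_mult_coset[OF is_ideal_I_C is_ideal_curve_ideal_prod])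
  have "curve_ideal_prod (I_pt h P0) (I_pt h (iota P0)) \<subseteq> {x. b * x \<in> S}"
  proof (rule curve_ideal_prod_least[OF is_ideal_colon[OF S]])
    show "I_C h \<subseteq> {x. b * x \<in> S}"
    proof
      fix c assume "c \<in> I_C h"
      then have "b * c - u * 0 \<in> I_C h" using ideal_mult_left[OF is_ideal_I_C] by simp
      then show "c \<in> {x. b * x \<in> S}" unfolding S_def K_def
        using ideal_0[OF is_ideal_curve_ideal_prod] by blast
    qed
  next
    fix i j assume i: "i \<in> I_pt h P0" and j: "j \<in> I_pt h (iota P0)"
    obtain c where c: "c \<in> vanishing_ideal B" "b * j - u * c \<in> I_C h"
      using mult_I_pt_iota_divide[OF P0 b j] u_def by blast
    have "b * (i * j) - u * (i * c) = i * (b * j - u * c)" by (simp add: algebra_simps)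
    then have "b * (i * j) - u * (i * c) \<in> I_C h" using ideal_mult_left[OF is_ideal_I_C c(2)] by simp
    moreover have "i * c \<in> K" unfolding K_def by (rule curve_ideal_prod_mult[OF i c(1)])
    ultimately show "i * j \<in> {x. b * x \<in> S}" unfolding S_def by blast
  qed
  then have "b * u \<in> S" using X_minus_in_curve_ideal_prod_iota[OF P0] u_def by blast
  then obtain w where w: "w \<in> K" "u * (b - w) \<in> I_C h"
    unfolding S_def by (auto simp: algebra_simps)
  then have "b - w \<in> I_C h" using mult_notin_I_C[OF u] by blast
  then have "(b - w) + w \<in> K"
    using w(1) unfolding K_def by (rule ideal_add[OF is_ideal_curve_ideal_prod I_C_in_curve_ideal_prod])
  then show ?thesis by (simp add: K_def)
qed

lemma curve_ideal_prod_shift: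
  assumes P0: "on_curve h P0" and A: "A P0 \<noteq> 0"
  shows "curve_ideal_prod (vanishing_ideal (A(P0 := A P0 - 1))) (vanishing_ideal (\<lambda>P. B P + of_bool (P = P0)))
    \<subseteq> curve_ideal_prod (vanishing_ideal A) (vanishing_ideal B)" (is "_ \<subseteq> ?K")
proof (rule curve_ideal_prod_least[OF is_ideal_curve_ideal_prod])
  show "I_C h \<subseteq> ?K" using I_C_in_curve_ideal_prod by blast
next
  fix a b assume a: "a \<in> vanishing_ideal (A(P0 := A P0 - 1))"
    and b: "b \<in> vanishing_ideal (\<lambda>P. B P + of_bool (P = P0))"
  have "curve_ideal_prod (I_pt h P0) (vanishing_ideal B) \<subseteq> {x. a * x \<in> ?K}"
  proof (rule curve_ideal_prod_least[OF is_ideal_colon[OF is_ideal_curve_ideal_prod]])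
    show "I_C h \<subseteq> {x. a * x \<in> ?K}"
      using I_C_in_curve_ideal_prod ideal_mult_left[OF is_ideal_I_C] by blast
  next
    fix i w assume i: "i \<in> I_pt h P0" and w: "w \<in> vanishing_ideal B"
    have "a * i \<in> vanishing_ideal (\<lambda>P. (A(P0 := A P0 - 1)) P + of_bool (P = P0))"
      by (rule vanishing_ideal_mult[OF a I_pt_in_vanishing_ideal[OF i]])
    also have "\<dots> = vanishing_ideal A" by (rule vanishing_ideal_cong) (use A in auto)
    finally have "(a * i) * w \<in> ?K" by (rule curve_ideal_prod_mult[OF _ w])
    then show "i * w \<in> {x. a * x \<in> ?K}" by (simp add: mult.assoc)
  qed
  then show "a * b \<in> ?K" using vanishing_ideal_Suc[OF P0 b] by blast
qed

lemma vanishing_ideal_add_subset: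
  assumes "finite {P. A P \<noteq> 0}" "\<forall>P. A P \<noteq> 0 \<longrightarrow> on_curve h P"
  shows "vanishing_ideal (\<lambda>P. A P + B P) \<subseteq> curve_ideal_prod (vanishing_ideal A) (vanishing_ideal B)"
  using assms
proof (induction "deg_eff A" arbitrary: A B)
  case 0
  then have "A = (\<lambda>_. 0)" by (auto simp: deg_eff_def)
  then have "1 \<in> vanishing_ideal A" by (simp add: vanishing_ideal_def order_ideal_0)
  then show ?case
    using curve_ideal_prod_mult[of 1 "vanishing_ideal A"] \<open>A = (\<lambda>_. 0)\<close> by auto
next
  case (Suc n)
  then obtain P0 where P0: "A P0 \<noteq> 0"
    by (metis deg_eff_def sum.neutral mem_Collect_eq nat.distinct(1))
  define A' where "A' = A(P0 := A P0 - 1)"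
  have "n = deg_eff A'" unfolding A'_def using deg_eff_decrement[OF Suc.prems(1) P0] Suc.hyps(2) by simp
  moreover have "finite {P. A' P \<noteq> 0}"
    using Suc.prems(1) by (rule rev_finite_subset) (auto simp: A'_def)
  moreover have "\<forall>P. A' P \<noteq> 0 \<longrightarrow> on_curve h P"
    using Suc.prems(2) P0 by (auto simp: A'_def)
  ultimately have "vanishing_ideal (\<lambda>P. A' P + (B P + of_bool (P = P0)))
      \<subseteq> curve_ideal_prod (vanishing_ideal A') (vanishing_ideal (\<lambda>P. B P + of_bool (P = P0)))"
    by (rule Suc.hyps(1))
  also have "(\<lambda>P. A' P + (B P + of_bool (P = P0))) = (\<lambda>P. A P + B P)"
    using P0 by (auto simp: A'_def)
  finally show ?case
    using curve_ideal_prod_shift[of P0 A B] Suc.prems(2) P0 unfolding A'_def by blast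
qed

lemma conj_bp_vanishing_ideal: "F \<in> vanishing_ideal A \<Longrightarrow> conj_bp F \<in> vanishing_ideal (\<lambda>Q. A (iota Q))"
  unfolding vanishing_ideal_def
proof (intro CollectI allI impI)
  fix Q assume F: "F \<in> {F. \<forall>P. on_curve h P \<longrightarrow> F \<in> order_ideal P (A P)}" and Q: "on_curve h Q"
  have "F \<in> order_ideal (iota Q) (A (iota Q))" using F Q on_curve_iota by blast
  then show "conj_bp F \<in> order_ideal Q (A (iota Q))" using conj_bp_order_ideal[of F "iota Q"] by simp
qed

lemma conj_ideal_I_div:
  assumes "effective h A"
  shows "conj_ideal (I_div h A) = vanishing_ideal (\<lambda>P. A (iota P))"
proof
  show "conj_ideal (I_div h A) \<subseteq> vanishing_ideal (\<lambda>P. A (iota P))"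
    using conj_bp_vanishing_ideal by (auto simp: conj_ideal_def I_div_eq_vanishing_ideal[OF assms])
  show "vanishing_ideal (\<lambda>P. A (iota P)) \<subseteq> conj_ideal (I_div h A)"
  proof
    fix F assume "F \<in> vanishing_ideal (\<lambda>P. A (iota P))"
    then have "conj_bp F \<in> I_div h A"
      using conj_bp_vanishing_ideal[of F "\<lambda>P. A (iota P)"]
        by (simp add: I_div_eq_vanishing_ideal[OF assms])
    then show "F \<in> conj_ideal (I_div h A)" unfolding conj_ideal_def by (rule image_eqI[rotated]) simp
  qed
qed

lemma J_eq_vanishing_ideal:
  assumes Dp: "effective h Dp" and Dm: "effective h Dm"
  shows "gen_ideal (ideal_prod (I_div h Dp) (conj_ideal (I_div h Dm)) \<union> I_C h)
    = vanishing_ideal (\<lambda>P. Dp P + Dm (iota P))"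
proof -
  have "gen_ideal (ideal_prod (I_div h Dp) (conj_ideal (I_div h Dm)) \<union> I_C h)
      = curve_ideal_prod (vanishing_ideal Dp) (vanishing_ideal (\<lambda>P. Dm (iota P)))"
    by (simp add: curve_ideal_prod_def I_div_eq_vanishing_ideal[OF Dp] conj_ideal_I_div[OF Dm])
  also have "\<dots> = vanishing_ideal (\<lambda>P. Dp P + Dm (iota P))"
  proof
    show "curve_ideal_prod (vanishing_ideal Dp) (vanishing_ideal (\<lambda>P. Dm (iota P)))
        \<subseteq> vanishing_ideal (\<lambda>P. Dp P + Dm (iota P))"
      by (rule curve_ideal_prod_least[OF is_ideal_vanishing_ideal])
        (auto intro: I_C_in_vanishing_ideal vanishing_ideal_mult)
    show "vanishing_ideal (\<lambda>P. Dp P + Dm (iota P))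
        \<subseteq> curve_ideal_prod (vanishing_ideal Dp) (vanishing_ideal (\<lambda>P. Dm (iota P)))"
      using Dp by (intro vanishing_ideal_add_subset) (auto simp: effective_def)
  qed
  finally show ?thesis .
qed

definition fibre_poly :: "(point \<Rightarrow> nat) \<Rightarrow> complex poly" where
  "fibre_poly A = (\<Prod>P\<in>{P. A P \<noteq> 0}. [:- fst P, 1:] ^ A P)"

lemma fibre_poly_nonzero: "finite {P. A P \<noteq> 0} \<Longrightarrow> fibre_poly A \<noteq> 0"
  unfolding fibre_poly_def by simp

lemma degree_fibre_poly: "degree (fibre_poly A) = deg_eff A"
proof -
  have "degree (fibre_poly A) = (\<Sum>P\<in>{P. A P \<noteq> 0}. degree ([:- fst P, 1:] ^ A P))"
    unfolding fibre_poly_def by (rule degree_prod_sum_eq) simp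
  also have "\<dots> = deg_eff A" by (simp add: deg_eff_def degree_linear_power)
  finally show ?thesis .
qed

lemma ord_at_fibre_poly:
  assumes A: "effective h A" and P: "on_curve h P"
  shows "ord_at P [:fibre_poly A:] = A P + A (iota P)"
proof -
  let ?S = "{P. A P \<noteq> 0}"
  have fin: "finite ?S" using A by (simp add: effective_def)
  have "order (fst P) (fibre_poly A) = (\<Sum>Q\<in>?S. if fst P = fst Q then A Q else 0)"
    unfolding fibre_poly_def using fin by (subst order_prod) (simp_all add: order_linear_power)
  also have "\<dots> = (\<Sum>Q\<in>?S \<union> {P, iota P}. if fst P = fst Q then A Q else 0)"
    using fin by (intro sum.mono_neutral_left) auto
  also have "\<dots> = (\<Sum>Q\<in>{P, iota P}. if fst P = fst Q then A Q else 0)"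
  proof (rule sum.mono_neutral_right)
    show "\<forall>Q\<in>?S \<union> {P, iota P} - {P, iota P}. (if fst P = fst Q then A Q else 0) = 0"
    proof
      fix Q assume Q: "Q \<in> ?S \<union> {P, iota P} - {P, iota P}"
      then have "on_curve h Q" using A unfolding effective_def by blast
      then show "(if fst P = fst Q then A Q else 0) = 0"
        using on_curve_same_x[OF P \<open>on_curve h Q\<close>] Q by (cases "fst P = fst Q") auto
    qed
  qed (use fin in auto)
  finally show ?thesis
    using ord_at_const[OF P fibre_poly_nonzero[OF fin]] iota_eq_iff[of P]
    by (cases "snd P = 0") (auto simp: ram_index_def)
qed

end

section \<open>The minimal element of J\<close>

locale minimal_element = hyperelliptic +
  fixes Dp Dm :: "point \<Rightarrow> nat" and f :: bpoly
  assumes Dp_eff: "effective h Dp" and Dm_eff: "effective h Dm"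
    and f_in: "f \<in> gen_ideal (ideal_prod (I_div h Dp) (conj_ideal (I_div h Dm)) \<union> I_C h)"
    and f_notin: "f \<notin> I_C h"
    and f_red: "degree f \<le> 1"
    and f_min: "\<forall>G \<in> gen_ideal (ideal_prod (I_div h Dp) (conj_ideal (I_div h Dm)) \<union> I_C h) - I_C h.
                  lead_mono g f = lead_mono g G \<or> mono_less g (lead_mono g f) (lead_mono g G)"
begin

definition D_J :: "point \<Rightarrow> nat" where "D_J P = Dp P + Dm (iota P)"

definition E :: "point \<Rightarrow> nat" where "E P = (if on_curve h P then ord_at P f - D_J P else 0)"

lemma J_eq: "gen_ideal (ideal_prod (I_div h Dp) (conj_ideal (I_div h Dm)) \<union> I_C h) = vanishing_ideal D_J"
  using J_eq_vanishing_ideal[OF Dp_eff Dm_eff] by (simp add: D_J_def[abs_def])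

lemma D_J_le_ord_at_f: "on_curve h P \<Longrightarrow> D_J P \<le> ord_at P f"
  using f_in vanishing_ideal_iff_ord_at[OF f_notin, of D_J] unfolding J_eq by blast

lemma ord_at_f: "on_curve h P \<Longrightarrow> ord_at P f = D_J P + E P"
  using D_J_le_ord_at_f by (simp add: E_def)

lemma deg_w_f: "deg_w g f = degree (curve_norm f)"
  by (rule deg_w_eq_degree_curve_norm[OF f_red f_notin])

lemma support_ord_at_f:
  "{P. E P \<noteq> 0} \<union> {P. Dp P \<noteq> 0} \<union> {P. Dm (iota P) \<noteq> 0} \<subseteq> {P. on_curve h P \<and> ord_at P f \<noteq> 0}"
proof
  fix P assume P: "P \<in> {P. E P \<noteq> 0} \<union> {P. Dp P \<noteq> 0} \<union> {P. Dm (iota P) \<noteq> 0}"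
  then have "on_curve h P"
    using effective_off_curve[OF Dp_eff, of P] effective_off_curve[OF Dm_eff, of "iota P"] E_def[of P]
    by (cases "on_curve h P") auto
  moreover have "ord_at P f \<noteq> 0" using P ord_at_f[OF calculation] by (auto simp: D_J_def)
  ultimately show "P \<in> {P. on_curve h P \<and> ord_at P f \<noteq> 0}" by blast
qed

lemma effective_E: "effective h E"
  using finite_subset[OF support_ord_at_f finite_support_ord_at[OF f_notin]] E_def
  unfolding effective_def by (metis (mono_tags, lifting) Un_iff finite_Un mem_Collect_eq)

lemma deg_eff_E: "int (deg_eff E) = int (deg_w g f) - int (deg_eff Dp) - int (deg_eff Dm)"
proof -
  define Z where "Z = {P. on_curve h P \<and> ord_at P f \<noteq> 0}"
  have Z: "finite Z" unfolding Z_def by (rule finite_support_ord_at[OF f_notin])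
  have sub: "{P. E P \<noteq> 0} \<subseteq> Z" "{P. Dp P \<noteq> 0} \<subseteq> Z" "{P. Dm (iota P) \<noteq> 0} \<subseteq> Z"
    using support_ord_at_f unfolding Z_def by blast+
  have Dm: "finite {P. Dm P \<noteq> 0}" using Dm_eff by (simp add: effective_def)
  have "deg_w g f = (\<Sum>P\<in>Z. ord_at P f)"
    unfolding Z_def deg_w_f by (rule sum_ord_at[OF f_notin, symmetric])
  also have "\<dots> = (\<Sum>P\<in>Z. Dp P + Dm (iota P) + E P)"
    by (rule sum.cong) (simp_all add: Z_def ord_at_f D_J_def)
  also have "\<dots> = deg_eff Dp + deg_eff (\<lambda>P. Dm (iota P)) + deg_eff E"
    by (simp only: sum.distrib deg_eff_eq_sum[OF Z sub(1)] deg_eff_eq_sum[OF Z sub(2)]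
        deg_eff_eq_sum[OF Z sub(3)])
  finally show ?thesis using deg_eff_comp_iota[OF Dm] by simp
qed

lemma div_of_f: "div_of g h f Q = (case Q of None \<Rightarrow> - int (deg_w g f)
     | Some P \<Rightarrow> int (Dp P) + int (Dm (iota P)) + int (E P))"
proof (cases Q)
  case None
  then show ?thesis using div_of_None[OF f_notin] deg_w_f by simp
next
  case (Some P)
  show ?thesis
  proof (cases "on_curve h P")
    case True
    then show ?thesis using Some div_of_Some[OF True f_notin] ord_at_f[OF True] by (simp add: D_J_def)
  next
    case False
    then show ?thesis
      using Some div_of_Some_off_curve[OF False] effective_off_curve[OF Dp_eff False]
        effective_off_curve[OF Dm_eff, of "iota P"] by (simp add: E_def)
  qed
qed

lemma lin_equiv_E_iota:
  "lin_equiv g h (semired (E \<circ> iota))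
     (\<lambda>Q. case Q of None \<Rightarrow> - (int (deg_eff Dp) - int (deg_eff Dm)) | Some P \<Rightarrow> int (Dp P) - int (Dm P))"
  unfolding lin_equiv_def
proof (intro exI conjI allI)
  have Dp: "finite {P. Dp P \<noteq> 0}" using Dp_eff by (simp add: effective_def)
  have E: "finite {P. E P \<noteq> 0}" using effective_E by (simp add: effective_def)
  show cf: "conj_bp f \<notin> I_C h" using f_notin conj_bp_in_I_C_iff by blast
  show cD: "[:fibre_poly Dp:] \<notin> I_C h" by (rule const_notin_I_C[OF fibre_poly_nonzero[OF Dp]])
  fix Q
  show "semired (E \<circ> iota) Q - (case Q of None \<Rightarrow> - (int (deg_eff Dp) - int (deg_eff Dm))
      | Some P \<Rightarrow> int (Dp P) - int (Dm P)) = div_of g h (conj_bp f) Q - div_of g h [:fibre_poly Dp:] Q"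
  proof (cases Q)
    case None
    have "degree (curve_norm [:fibre_poly Dp:]) = 2 * deg_eff Dp"
      using fibre_poly_nonzero[OF Dp] degree_fibre_poly by (simp add: curve_norm_const degree_mult_eq)
    then show ?thesis
      using None div_of_None[OF cf] div_of_None[OF cD] deg_eff_E deg_w_f deg_eff_comp_iota[OF E]
      by (simp add: semired_def curve_norm_conj_bp comp_def)
  next
    case (Some P)
    show ?thesis
    proof (cases "on_curve h P")
      case True
      then show ?thesis
        using Some div_of_Some[OF True cf] div_of_Some[OF True cD] ord_at_fibre_poly[OF Dp_eff True]
          ord_at_conj_bp[OF True f_notin] ord_at_f[of "iota P"]
        by (simp add: semired_def D_J_def)
    next
      case False
      then show ?thesis
        using Some div_of_Some_off_curve effective_off_curve[OF Dp_eff] effective_off_curve[OF Dm_eff]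
        by (simp add: semired_def E_def)
    qed
  qed
qed

lemma deg_w_f_le:
  assumes G: "G \<in> vanishing_ideal D_J" "G \<notin> I_C h"
  shows "deg_w g f \<le> degree (curve_norm G)"
proof -
  have "curve_rem G \<in> vanishing_ideal D_J"
    using ideal_diff[OF is_ideal_vanishing_ideal G(1) I_C_in_vanishing_ideal[OF curve_rem_diff_in_I_C[of G]]]
      by simp
  moreover have "curve_rem G \<notin> I_C h"
    using G(2) I_C_iff_curve_rem curve_rem_eq_self degree_curve_rem by metis
  ultimately have "deg_w g f \<le> deg_w g (curve_rem G)"
    using f_min J_eq deg_w_le_of_mono_le by blast
  also have "\<dots> = degree (curve_norm G)"
    using deg_w_eq_degree_curve_norm[OF degree_curve_rem \<open>curve_rem G \<notin> I_C h\<close>]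
      curve_norm_I_C_diff[OF curve_rem_diff_in_I_C]
    by simp
  finally show ?thesis .
qed

lemma ord_at_twisted_product:
  assumes P: "on_curve h P" and F: "F \<notin> I_C h" and G: "G \<notin> I_C h"
    and eq: "int (E' (iota P)) - int (E P) = int (ord_at (iota P) F) - int (ord_at (iota P) G)"
  shows "ord_at P (f * conj_bp F * G) = ord_at P [:curve_norm G:] + D_J P + E' (iota P)"
proof -
  have "conj_bp F \<notin> I_C h" using F conj_bp_in_I_C_iff by blast
  then have "ord_at P (f * conj_bp F * G) = ord_at P f + ord_at (iota P) F + ord_at P G"
    using ord_at_mult[OF P] mult_notin_I_C f_notin G ord_at_conj_bp[OF P F] by simp
  then show ?thesis using eq ord_at_curve_norm[OF P G] ord_at_f[OF P] by simp
qed

lemma twisted_product_quotient: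
  assumes F: "F \<notin> I_C h" and G: "G \<notin> I_C h"
    and eq: "\<And>P. on_curve h P \<Longrightarrow>
      int (E' (iota P)) - int (E P) = int (ord_at (iota P) F) - int (ord_at (iota P) G)"
  obtains \<phi> where "f * conj_bp F * G - [:curve_norm G:] * \<phi> \<in> I_C h"
    "\<phi> \<in> vanishing_ideal D_J" "\<phi> \<notin> I_C h"
proof -
  define \<Psi> where "\<Psi> = f * conj_bp F * G"
  have \<Psi>: "\<Psi> \<notin> I_C h" unfolding \<Psi>_def
    using mult_notin_I_C f_notin conj_bp_in_I_C_iff F G by metis
  have c: "[:curve_norm G:] \<notin> I_C h" by (rule const_notin_I_C[OF curve_norm_nonzero[OF G]])
  have ord: "ord_at P \<Psi> = ord_at P [:curve_norm G:] + D_J P + E' (iota P)" if "on_curve h P" for P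
    unfolding \<Psi>_def by (rule ord_at_twisted_product[where E' = E', OF that F G eq[OF that]])
  then obtain \<phi> where \<phi>: "\<Psi> - [:curve_norm G:] * \<phi> \<in> I_C h"
    using divide_by_const[OF curve_norm_nonzero[OF G]] order_ideal_iff_ord_at[OF _ \<Psi>] by fastforce
  have \<phi>n: "\<phi> \<notin> I_C h"
  proof
    assume "\<phi> \<in> I_C h"
    then have "(\<Psi> - [:curve_norm G:] * \<phi>) + [:curve_norm G:] * \<phi> \<in> I_C h"
      by (rule ideal_add[OF is_ideal_I_C \<phi> ideal_mult_left[OF is_ideal_I_C]])
    then show False using \<Psi> by simp
  qed
  have "D_J P \<le> ord_at P \<phi>" if "on_curve h P" for P
    using ord[OF that] ord_at_I_C_diff[OF that \<phi>] ord_at_mult[OF that c \<phi>n] by simp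
  then have "\<phi> \<in> vanishing_ideal D_J" using vanishing_ideal_iff_ord_at[OF \<phi>n] by blast
  then show ?thesis using that \<phi> \<phi>n unfolding \<Psi>_def by blast
qed

lemma deg_eff_E_le:
  assumes E': "effective h E'" and le: "lin_equiv g h (semired E') (semired (E \<circ> iota))"
  shows "deg_eff E \<le> deg_eff E'"
proof -
  obtain F G where F: "F \<notin> I_C h" and G: "G \<notin> I_C h"
    and eq: "\<And>Q. semired E' Q - semired (E \<circ> iota) Q = div_of g h F Q - div_of g h G Q"
    using le unfolding lin_equiv_def by blast
  have "int (E' (iota P)) - int (E P) = int (ord_at (iota P) F) - int (ord_at (iota P) G)"
    if "on_curve h P" for P
    using eq[of "Some (iota P)"] that div_of_Some[OF _ F] div_of_Some[OF _ G] by (simp add: semired_def)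
  then obtain \<phi> where \<phi>: "f * conj_bp F * G - [:curve_norm G:] * \<phi> \<in> I_C h"
    "\<phi> \<in> vanishing_ideal D_J" "\<phi> \<notin> I_C h"
    by (rule twisted_product_quotient[OF F G])
  have "curve_norm (f * conj_bp F * G) = curve_norm ([:curve_norm G:] * \<phi>)"
    by (rule curve_norm_I_C_diff[OF \<phi>(1)])
  then have "curve_norm G * (curve_norm f * curve_norm F) = curve_norm G * (curve_norm G * curve_norm \<phi>)"
    by (simp only: curve_norm_mult curve_norm_conj_bp curve_norm_const ac_simps)
  then have "degree (curve_norm f * curve_norm F) = degree (curve_norm G * curve_norm \<phi>)"
    using curve_norm_nonzero[OF G] by simp
  then have "degree (curve_norm f) + degree (curve_norm F) = degree (curve_norm G) + degree (curve_norm \<phi>)"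
    using curve_norm_nonzero[OF f_notin] curve_norm_nonzero[OF F] curve_norm_nonzero[OF G]
      curve_norm_nonzero[OF \<phi>(3)] by (simp add: degree_mult_eq)
  moreover have "int (deg_eff E) - int (deg_eff E')
      = int (degree (curve_norm G)) - int (degree (curve_norm F))"
    using eq[of None] div_of_None[OF F] div_of_None[OF G] deg_eff_comp_iota[of E] effective_E
    by (simp add: semired_def effective_def comp_def)
  moreover have "deg_w g f \<le> degree (curve_norm \<phi>)" by (rule deg_w_f_le[OF \<phi>(2,3)])
  ultimately show ?thesis using deg_w_f by linarith
qed

lemma is_reduced_E_iota: "is_reduced g h (semired (E \<circ> iota))"
  unfolding is_reduced_def
proof (intro exI conjI allI impI)
  show "effective h (E \<circ> iota)" using effective_comp_iota[OF effective_E] by (simp add: comp_def)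
  fix E' assume "effective h E' \<and> lin_equiv g h (semired E') (semired (E \<circ> iota))"
  then show "deg_eff (E \<circ> iota) \<le> deg_eff E'"
    using deg_eff_E_le deg_eff_comp_iota[of E] effective_E by (auto simp: effective_def comp_def)
qed simp

end

lemma hyperelliptic_prod_linear:
  fixes g :: nat and a :: complex and xs :: "nat \<Rightarrow> complex" and h :: "complex poly"
  assumes a_nz: "a \<noteq> 0"
    and xs_distinct: "inj_on xs {..<2 * g + 1}"
    and h_def: "h = smult a (\<Prod>i<2 * g + 1. [: - xs i, 1 :])"
  shows "hyperelliptic g h"
proof
  show "degree h = 2 * g + 1"
  proof -
    have "degree (\<Prod>i<2 * g + 1. [: - xs i, 1 :]) = (\<Sum>i<2 * g + 1. degree [: - xs i, 1 :])"
      by (rule degree_prod_sum_eq) simp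
    then show ?thesis using a_nz by (simp add: h_def)
  qed
  fix x0
  have "order x0 h = order x0 (\<Prod>i<2 * g + 1. [: - xs i, 1 :])"
    using a_nz by (simp add: h_def order_smult)
  also have "\<dots> = (\<Sum>i<2 * g + 1. order x0 [: - xs i, 1 :])"
    by (rule order_prod) simp_all
  also have "\<dots> = (\<Sum>i<2 * g + 1. if x0 = xs i then 1 else 0)"
    by (intro sum.cong refl) (use order_linear_power[of x0 _ 1] in simp)
  also have "\<dots> = (\<Sum>i\<in>{i \<in> {..<2 * g + 1}. x0 = xs i}. 1)"
    by (rule sum.inter_filter[symmetric]) simp
  also have "\<dots> = card {i \<in> {..<2 * g + 1}. x0 = xs i}"
    by (rule card_eq_sum[symmetric])
  also have "\<dots> \<le> 1"
  proof -
    have "finite {i \<in> {..<2 * g + 1}. x0 = xs i}" by simp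
    moreover have "\<forall>i\<in>{i \<in> {..<2 * g + 1}. x0 = xs i}. \<forall>j\<in>{i \<in> {..<2 * g + 1}. x0 = xs i}. i = j"
      using xs_distinct unfolding inj_on_def by blast
    ultimately have "card {i \<in> {..<2 * g + 1}. x0 = xs i} \<le> Suc 0"
      using card_le_Suc0_iff_eq by blast
    then show ?thesis by simp
  qed
  finally show "order x0 h \<le> 1" .
qed

theorem lemma9:
  fixes g :: nat and a :: complex and xs :: "nat \<Rightarrow> complex" and h :: "complex poly"
    and Dp Dm :: "point \<Rightarrow> nat" and f :: bpoly
  assumes a_nz: "a \<noteq> 0"
    and xs_distinct: "inj_on xs {..<2 * g + 1}"
    and h_def: "h = smult a (\<Prod>i<2 * g + 1. [: - xs i, 1 :])"
    and Dp_eff: "effective h Dp" and Dm_eff: "effective h Dm"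
    and f_in: "f \<in> gen_ideal (ideal_prod (I_div h Dp) (conj_ideal (I_div h Dm)) \<union> I_C h)"
    and f_notin: "f \<notin> I_C h"
    and f_reduced: "degree f \<le> 1"
    and f_min: "\<forall>G \<in> gen_ideal (ideal_prod (I_div h Dp) (conj_ideal (I_div h Dm)) \<union> I_C h) - I_C h.
                  lead_mono g f = lead_mono g G \<or> mono_less g (lead_mono g f) (lead_mono g G)"
  shows "\<exists>E. effective h E \<and>
           int (deg_eff E) = int (deg_w g f) - int (deg_eff Dp) - int (deg_eff Dm) \<and>
           (\<forall>Q. div_of g h f Q = (case Q of None \<Rightarrow> - int (deg_w g f)
                  | Some P \<Rightarrow> int (Dp P) + int (Dm (iota P)) + int (E P))) \<and>
           is_reduced g h (semired (E \<circ> iota)) \<and>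
           lin_equiv g h (semired (E \<circ> iota))
             (\<lambda>Q. case Q of None \<Rightarrow> - (int (deg_eff Dp) - int (deg_eff Dm))
                  | Some P \<Rightarrow> int (Dp P) - int (Dm P))"
proof -
  interpret hyperelliptic g h by (rule hyperelliptic_prod_linear[OF a_nz xs_distinct h_def])
  interpret minimal_element g h Dp Dm f
    by unfold_locales (use Dp_eff Dm_eff f_in f_notin f_reduced f_min in auto)
  show ?thesis using effective_E deg_eff_E div_of_f is_reduced_E_iota lin_equiv_E_iota by blast
qed

end
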